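(* Let $p=\tfrac12$, $\mu=\mu_{1/2}$, and $K_\infty=\sum_{n=0}^\infty2^{-n}E_n$ on $L^2(\mu)$ (norm convergent). For $1\le r<\infty$, $K_\infty$ belongs to the Schatten class $S_r$ if and only if $r>1$. In particular $K_\infty$ is Hilbert–Schmidt but not trace class.
   Context: Let $S_0(x)=x/3$, $S_2(x)=(x+2)/3$ on $[0,1]$ and let $C$ be the middle-third Cantor set. $\mu=\mu_{1/2}$ is the unique Borel probability measure on $[0,1]$ with $\mu=\frac12\mu\circ S_0^{-1}+\frac12\mu\circ S_2^{-1}$. For words $w\in\{0,2\}^n$, $S_w=S_{w_1}\circ\cdots\circ S_{w_n}$, $C_w=S_w(C)$. $E_n$ is the conditional expectation on $L^2(\mu)$ onto the $\sigma$-algebra generated by $\{C_w:|w|=n\}$. $S_r$ is the class of compact operators whose singular values are $r$-summable. *)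

theory Defs
  imports "HOL-Probability.Probability"
begin

definition S :: "nat \<Rightarrow> real \<Rightarrow> real" where
  "S a x = (x + real a) / 3"

definition S0 :: "real \<Rightarrow> real" where "S0 = S 0"
definition S2 :: "real \<Rightarrow> real" where "S2 = S 2"

definition words :: "nat \<Rightarrow> nat list set" where
  "words n = {w. length w = n \<and> set w \<subseteq> {0, 2}}"

definition Sw :: "nat list \<Rightarrow> real \<Rightarrow> real" where
  "Sw w = foldr (\<lambda>a f. S a \<circ> f) w id"

definition cantor :: "real set" where
  "cantor = (\<Inter>n. \<Union>w\<in>words n. Sw w ` {0..1})"

definition Cw :: "nat list \<Rightarrow> real set" where
  "Cw w = Sw w ` cantor"

text \<open>M is a Borel probability measure on [0,1] with M = 1/2 M o S0^-1 + 1/2 M o S2^-1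
  (such a measure is unique; this is mu_{1/2}).\<close>
definition is_cantor_measure :: "real measure \<Rightarrow> bool" where
  "is_cantor_measure M \<longleftrightarrow>
     prob_space M \<and> sets M = sets (restrict_space borel {0..1}) \<and>
     (\<forall>A\<in>sets M. emeasure M A =
        ennreal (1/2) * emeasure M (S0 -` A \<inter> space M)
      + ennreal (1/2) * emeasure M (S2 -` A \<inter> space M))"

definition L2 :: "real measure \<Rightarrow> (real \<Rightarrow> real) set" where
  "L2 M = {f. f \<in> borel_measurable M \<and> integrable M (\<lambda>x. (f x)\<^sup>2)}"

definition l2norm :: "real measure \<Rightarrow> (real \<Rightarrow> real) \<Rightarrow> real" where
  "l2norm M f = sqrt (\<integral>x. (f x)\<^sup>2 \<partial>M)"

definition Fn :: "real measure \<Rightarrow> nat \<Rightarrow> real measure" where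
  "Fn M n = sigma (space M) (Cw ` words n)"

definition En :: "real measure \<Rightarrow> nat \<Rightarrow> (real \<Rightarrow> real) \<Rightarrow> (real \<Rightarrow> real)" where
  "En M n f = real_cond_exp M (Fn M n) f"

definition Kinf :: "real measure \<Rightarrow> (real \<Rightarrow> real) \<Rightarrow> (real \<Rightarrow> real)" where
  "Kinf M f = (\<lambda>x. \<Sum>n. (1/2) ^ n * En M n f x)"

text \<open>Linear operator on L^2(M) (acting on representatives, compatible with a.e. equality).\<close>
definition lin_op :: "real measure \<Rightarrow> ((real \<Rightarrow> real) \<Rightarrow> (real \<Rightarrow> real)) \<Rightarrow> bool" where
  "lin_op M T \<longleftrightarrow>
     (\<forall>f\<in>L2 M. T f \<in> L2 M) \<and>
     (\<forall>f\<in>L2 M. \<forall>g\<in>L2 M. \<forall>a b. AE x in M. T (\<lambda>y. a * f y + b * g y) x = a * T f x + b * T g x) \<and>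
     (\<forall>f\<in>L2 M. \<forall>g\<in>L2 M. (AE x in M. f x = g x) \<longrightarrow> (AE x in M. T f x = T g x))"

definition opnorm :: "real measure \<Rightarrow> ((real \<Rightarrow> real) \<Rightarrow> (real \<Rightarrow> real)) \<Rightarrow> ereal" where
  "opnorm M T = (SUP f\<in>{f\<in>L2 M. l2norm M f \<le> 1}.
       (if T f \<in> L2 M then ereal (l2norm M (T f)) else \<infinity>))"

definition rank_le :: "real measure \<Rightarrow> nat \<Rightarrow> ((real \<Rightarrow> real) \<Rightarrow> (real \<Rightarrow> real)) \<Rightarrow> bool" where
  "rank_le M k F \<longleftrightarrow> lin_op M F \<and>
     (\<exists>g::nat \<Rightarrow> real \<Rightarrow> real. (\<forall>i<k. g i \<in> L2 M) \<and>
        (\<forall>f\<in>L2 M. \<exists>c::nat \<Rightarrow> real. AE x in M. F f x = (\<Sum>i<k. c i * g i x)))"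

text \<open>k-th singular value (0-indexed): s_k(T) = inf { ||T - F|| : rank F \<le> k }.\<close>
definition sing_val :: "real measure \<Rightarrow> ((real \<Rightarrow> real) \<Rightarrow> (real \<Rightarrow> real)) \<Rightarrow> nat \<Rightarrow> ereal" where
  "sing_val M T k = (INF F\<in>{F. rank_le M k F}. opnorm M (\<lambda>f x. T f x - F f x))"

definition compact_op :: "real measure \<Rightarrow> ((real \<Rightarrow> real) \<Rightarrow> (real \<Rightarrow> real)) \<Rightarrow> bool" where
  "compact_op M T \<longleftrightarrow>
     (\<forall>f::nat \<Rightarrow> real \<Rightarrow> real. (\<forall>k. f k \<in> L2 M \<and> l2norm M (f k) \<le> 1) \<longrightarrow>
        (\<exists>\<phi>::nat \<Rightarrow> nat. strict_mono \<phi> \<and>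
           (\<forall>e>0. \<exists>N. \<forall>m\<ge>N. \<forall>n\<ge>N. l2norm M (\<lambda>x. T (f (\<phi> m)) x - T (f (\<phi> n)) x) < e)))"

definition schatten :: "real measure \<Rightarrow> real \<Rightarrow> ((real \<Rightarrow> real) \<Rightarrow> (real \<Rightarrow> real)) \<Rightarrow> bool" where
  "schatten M r T \<longleftrightarrow> lin_op M T \<and> compact_op M T \<and>
     summable (\<lambda>k. real_of_ereal (sing_val M T k) powr r)"

end

theory Submission
  imports Defs "HOL-Library.Diagonal_Subsequence"
begin

text \<open>Each \<open>E\<^sub>n\<close> is the orthogonal projection onto the \<open>2\<^sup>n\<close>-dimensional space of functions
  that are constant on the cylinders \<open>C\<^sub>w\<close>, \<open>|w| = n\<close>, and these spaces increase with \<open>n\<close>.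
  The truncation \<open>T\<^sub>N = \<Sum>\<^sub>n\<^sub><\<^sub>N 2\<^sup>-\<^sup>n E\<^sub>n\<close> therefore has rank below \<open>2\<^sup>N\<close> and
  \<open>\<parallel>K\<^sub>\<infinity> - T\<^sub>N\<parallel> \<le> 2\<^sup>1\<^sup>-\<^sup>N\<close>, which gives the upper bound on the singular values and compactness.
  Conversely, every \<open>u\<close> in the level-\<open>N\<close> space satisfies \<open>\<langle>K\<^sub>\<infinity>u, u\<rangle> \<ge> 2\<^sup>-\<^sup>N \<parallel>u\<parallel>\<^sup>2\<close>, and an
  operator of rank \<open>k < 2\<^sup>N\<close> annihilates some nonzero such \<open>u\<close>; hence it misses \<open>K\<^sub>\<infinity>\<close> by at
  least \<open>2\<^sup>-\<^sup>N\<close>. So the \<open>k\<close>-th singular value is comparable to \<open>1/(k+1)\<close>, and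
  \<open>\<Sum>\<^sub>k s\<^sub>k\<^sup>r < \<infinity>\<close> exactly when \<open>r > 1\<close>.\<close>

section \<open>Words and cylinders\<close>

lemma Sw_Nil [simp]: "Sw [] = id"
  by (simp add: Sw_def)

lemma Sw_Cons [simp]: "Sw (a # w) = S a \<circ> Sw w"
  by (simp add: Sw_def)

lemma Sw_affine: "Sw w x = x / 3 ^ length w + Sw w 0"
proof (induction w arbitrary: x)
  case Nil
  then show ?case by simp
next
  case (Cons a w)
  have "Sw w x = x / 3 ^ length w + Sw w 0" by (rule Cons.IH)
  then show ?case by (simp add: S_def add_divide_distrib)
qed

lemma Sw_image_unit_interval: "Sw w ` {0..1} = {Sw w 0 .. Sw w 0 + 1 / 3 ^ length w}"
proof -
  have "Sw w ` {0..1} = (\<lambda>x. x / 3 ^ length w + Sw w 0) ` {0..1}"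
    by (rule image_cong[OF refl]) (rule Sw_affine)
  also have "\<dots> = {Sw w 0 .. Sw w 0 + 1 / 3 ^ length w}"
    by (auto simp: image_iff field_simps intro!: bexI[where x="(_ - Sw w 0) * 3 ^ length w"])
  finally show ?thesis .
qed

lemma Sw_in_unit_interval:
  assumes "set w \<subseteq> {0,2}" "x \<in> {0..1}"
  shows "Sw w x \<in> {0..1}"
  using assms
proof (induction w)
  case (Cons a w)
  then have "Sw w x \<in> {0..1}" "a = 0 \<or> a = 2" by auto
  then show ?case by (auto simp: S_def)
qed simp

text \<open>Distinct digits \<open>0, 2\<close> send \<open>[0,1]\<close> to \<open>[0,1/3]\<close> and \<open>[2/3,1]\<close>, so the first letters agree.\<close>
lemma Sw_eq_imp_eq:
  assumes "length w = length w'" "set w \<subseteq> {0,2}" "set w' \<subseteq> {0,2}"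
    and "x \<in> {0..1}" "y \<in> {0..1}" "Sw w x = Sw w' y"
  shows "w = w'"
  using assms
proof (induction w arbitrary: w')
  case Nil
  then show ?case by simp
next
  case (Cons a w)
  then obtain b v where w': "w' = b # v" by (cases w') auto
  have "Sw w x \<in> {0..1}" "Sw v y \<in> {0..1}" using Cons w' Sw_in_unit_interval by auto
  moreover have "a = 0 \<or> a = 2" "b = 0 \<or> b = 2" using Cons w' by auto
  moreover have eq: "Sw w x + a = Sw v y + b" using Cons(7) w' by (simp add: S_def)
  ultimately have "a = b" by auto
  with eq have "w = v" using Cons w' by auto
  with \<open>a = b\<close> show ?case using w' by simp
qed

lemma words_Suc: "words (Suc n) = (\<lambda>(a,w). a # w) ` ({0,2} \<times> words n)"
  by (auto simp: words_def length_Suc_conv image_iff)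

lemma words_eq_lists: "words n = {xs. set xs \<subseteq> {0,2} \<and> length xs = n}"
  by (auto simp: words_def)

lemma finite_words: "finite (words n)"
  using finite_lists_length_eq[of "{0,2::nat}" n] by (simp add: words_eq_lists)

lemma card_words: "card (words n) = 2 ^ n"
  using card_lists_length_eq[of "{0,2::nat}" n] by (simp add: words_eq_lists numeral_2_eq_2)

definition cantor_level :: "nat \<Rightarrow> real set" where
  "cantor_level n = (\<Union>w\<in>words n. Sw w ` {0..1})"

lemma cantor_eq_Inter_levels: "cantor = (\<Inter>n. cantor_level n)"
  by (simp add: cantor_def cantor_level_def)

lemma cantor_level_0: "cantor_level 0 = {0..1}"
proof -
  have "words 0 = {[]}" by (auto simp: words_def)
  then show ?thesis by (simp add: cantor_level_def)
qed

lemma cantor_level_Suc: "cantor_level (Suc n) = S 0 ` cantor_level n \<union> S 2 ` cantor_level n"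
  unfolding cantor_level_def words_Suc by (auto simp: image_comp image_Union)

lemma cantor_subset_unit_interval: "cantor \<subseteq> {0..1}"
  unfolding cantor_eq_Inter_levels using cantor_level_0 by blast

lemma Cw_Cons: "Cw (a # w) = S a ` Cw w"
  by (simp add: Cw_def image_comp)

lemma Cw_disjoint:
  assumes "w \<in> words n" "w' \<in> words n" "x \<in> Cw w" "x \<in> Cw w'"
  shows "w = w'"
proof -
  have "Cw v \<subseteq> Sw v ` {0..1}" for v
    using cantor_subset_unit_interval by (auto simp: Cw_def)
  then obtain a b where "a \<in> {0..1}" "b \<in> {0..1}" "x = Sw w a" "x = Sw w' b"
    using assms(3,4) by blast
  then show ?thesis using Sw_eq_imp_eq[of w w' a b] assms(1,2) by (auto simp: words_def)
qed

section \<open>The Cantor measure\<close>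

locale cantor_measure =
  fixes M :: "real measure"
  assumes is_cantor_measure: "is_cantor_measure M"
begin

sublocale prob_space M
  using is_cantor_measure by (simp add: is_cantor_measure_def)

lemma sets_cantor_measure: "sets M = sets (restrict_space borel {0..1})"
  using is_cantor_measure by (simp add: is_cantor_measure_def)

lemma space_cantor_measure: "space M = {0..1}"
  using sets_eq_imp_space_eq[OF sets_cantor_measure] by (simp add: space_restrict_space)

lemma sets_cantor_measure_iff: "A \<in> sets M \<longleftrightarrow> A \<subseteq> {0..1} \<and> A \<in> sets borel"
  unfolding sets_cantor_measure by (subst sets_restrict_space_iff) auto

lemma S_image_in_sets:
  assumes "X \<in> sets M" "a \<in> {0,2}"
  shows "S a ` X \<in> sets M"
proof -
  have X: "X \<subseteq> {0..1}" "X \<in> sets borel" using assms sets_cantor_measure_iff by auto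
  have "S a ` X = (\<lambda>y. 3 * y - real a) -` X"
  proof (intro set_eqI iffI)
    fix y assume "y \<in> S a ` X"
    moreover have "3 * S a x - real a = x" for x by (simp add: S_def field_simps)
    ultimately show "y \<in> (\<lambda>y. 3 * y - real a) -` X" by auto
  next
    fix y assume "y \<in> (\<lambda>y. 3 * y - real a) -` X"
    moreover have "y = S a (3 * y - real a)" by (simp add: S_def)
    ultimately show "y \<in> S a ` X" by blast
  qed
  moreover have "(\<lambda>y. 3 * y - real a) -` X \<in> sets borel"
    by (rule measurable_sets_borel[OF _ X(2)]) measurable
  moreover have "S a ` X \<subseteq> {0..1}" using X assms by (auto simp: S_def)
  ultimately show ?thesis using sets_cantor_measure_iff by auto
qed

lemma measure_S_images_Un:
  assumes X: "X \<in> sets M" and Y: "Y \<in> sets M"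
  shows "measure M (S 0 ` X \<union> S 2 ` Y) = measure M X / 2 + measure M Y / 2"
proof -
  let ?A = "S 0 ` X \<union> S 2 ` Y"
  have XY: "X \<subseteq> {0..1}" "Y \<subseteq> {0..1}" using X Y sets_cantor_measure_iff by auto
  have A: "?A \<in> sets M" using S_image_in_sets X Y by auto
  have "S0 -` ?A \<inter> space M = X" "S2 -` ?A \<inter> space M = Y"
    using XY by (auto simp: S0_def S2_def S_def space_cantor_measure)
  then have "emeasure M ?A = ennreal (1/2) * emeasure M X + ennreal (1/2) * emeasure M Y"
    using is_cantor_measure A unfolding is_cantor_measure_def by metis
  moreover have half: "ennreal (1/2) * ennreal (measure M Z) = ennreal (measure M Z / 2)" for Z
    by (subst ennreal_mult[symmetric]) auto
  ultimately have "ennreal (measure M ?A) = ennreal (measure M X / 2) + ennreal (measure M Y / 2)"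
    by (simp only: emeasure_eq_measure half)
  also have "\<dots> = ennreal (measure M X / 2 + measure M Y / 2)"
    by (rule ennreal_plus[symmetric]) auto
  finally show ?thesis by (subst (asm) ennreal_inj) auto
qed

lemma measure_S_image:
  assumes "X \<in> sets M" "a \<in> {0,2}"
  shows "measure M (S a ` X) = measure M X / 2"
  using assms measure_S_images_Un[of X "{}"] measure_S_images_Un[of "{}" X] by auto

lemma cantor_level_in_sets: "cantor_level n \<in> sets M"
proof -
  have "Sw w ` {0..1} \<in> sets M" if "w \<in> words n" for w
  proof -
    have "Sw w ` {0..1} \<subseteq> {0..1}" using Sw_in_unit_interval that by (auto simp: words_def)
    moreover have "Sw w ` {0..1} \<in> sets borel" by (simp only: Sw_image_unit_interval) simp
    ultimately show ?thesis by (simp add: sets_cantor_measure_iff)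
  qed
  then show ?thesis unfolding cantor_level_def using finite_words by auto
qed

lemma measure_cantor_level: "measure M (cantor_level n) = 1"
  by (induction n) (simp_all add: cantor_level_0 space_cantor_measure[symmetric] prob_space
      cantor_level_Suc measure_S_images_Un cantor_level_in_sets)

lemma cantor_in_sets: "cantor \<in> sets M"
  unfolding cantor_eq_Inter_levels using cantor_level_in_sets by auto

lemma measure_cantor: "measure M cantor = 1"
proof -
  have "AE x in M. x \<in> cantor_level n" for n
    using measure_cantor_level cantor_level_in_sets prob_eq_1 by blast
  then have "AE x in M. x \<in> cantor"
    by (simp add: cantor_eq_Inter_levels AE_all_countable)
  then show ?thesis using cantor_in_sets prob_eq_1 by blast
qed

lemma Cw_in_sets:
  assumes "w \<in> words n"
  shows "Cw w \<in> sets M"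
proof -
  have "set w \<subseteq> {0,2}" using assms by (simp add: words_def)
  then show ?thesis
  proof (induction w)
    case Nil
    then show ?case by (simp add: Cw_def cantor_in_sets)
  next
    case (Cons a w)
    then show ?case by (simp add: Cw_Cons S_image_in_sets)
  qed
qed

lemma measure_Cw:
  assumes "w \<in> words n"
  shows "measure M (Cw w) = (1/2) ^ n"
proof -
  have "set w \<subseteq> {0,2}" "length w = n" using assms by (auto simp: words_def)
  then show ?thesis
  proof (induction w arbitrary: n)
    case Nil
    then show ?case by (simp add: Cw_def measure_cantor)
  next
    case (Cons a w)
    have "Cw w \<in> sets M" using Cons.prems by (intro Cw_in_sets[of _ "length w"]) (simp add: words_def)
    then show ?case using Cons by (auto simp: Cw_Cons measure_S_image)
  qed
qed

lemma Cw_subset_space: "w \<in> words n \<Longrightarrow> Cw w \<subseteq> space M"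
  using Cw_in_sets sets.sets_into_space by blast

lemma AE_in_cylinder: "AE x in M. \<exists>w\<in>words n. x \<in> Cw w"
proof -
  have U: "(\<Union>w\<in>words n. Cw w) \<in> sets M"
    using finite_words Cw_in_sets by (intro sets.finite_UN) auto
  have "measure M (\<Union>w\<in>words n. Cw w) = (\<Sum>w\<in>words n. measure M (Cw w))"
    by (rule measure_finite_Union)
       (auto simp: finite_words Cw_in_sets disjoint_family_on_def dest: Cw_disjoint)
  also have "\<dots> = 1" by (simp add: measure_Cw card_words power_divide)
  finally have "AE x in M. x \<in> (\<Union>w\<in>words n. Cw w)"
    using prob_eq_1[OF U] by simp
  then show ?thesis by auto
qed

lemma Cw_nonempty: "w \<in> words n \<Longrightarrow> Cw w \<noteq> {}"
  using measure_Cw[of w n] by auto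

end

section \<open>Square-integrable functions\<close>

lemma L2_borel_measurable [measurable_dest]: "f \<in> L2 M \<Longrightarrow> f \<in> borel_measurable M"
  by (simp add: L2_def)

lemma L2_integrable_power2: "f \<in> L2 M \<Longrightarrow> integrable M (\<lambda>x. (f x)\<^sup>2)"
  by (simp add: L2_def)

lemma L2I: "f \<in> borel_measurable M \<Longrightarrow> integrable M (\<lambda>x. (f x)\<^sup>2) \<Longrightarrow> f \<in> L2 M"
  by (simp add: L2_def)

lemma integrable_L2_mult:
  assumes "f \<in> L2 M" "g \<in> L2 M"
  shows "integrable M (\<lambda>x. f x * g x)"
proof (rule Bochner_Integration.integrable_bound)
  show "integrable M (\<lambda>x. (f x)\<^sup>2 + (g x)\<^sup>2)"
    using assms by (simp add: L2_integrable_power2)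
  have "\<bar>a * b\<bar> \<le> a\<^sup>2 + b\<^sup>2" for a b :: real
    using sum_squares_bound[of "\<bar>a\<bar>" "\<bar>b\<bar>"] abs_ge_zero[of "a * b"]
    by (simp only: abs_mult power2_abs mult.assoc)
  then show "AE x in M. norm (f x * g x) \<le> norm ((f x)\<^sup>2 + (g x)\<^sup>2)"
    by auto
qed (use assms in measurable)

lemma L2_add:
  assumes "f \<in> L2 M" "g \<in> L2 M"
  shows "(\<lambda>x. f x + g x) \<in> L2 M"
proof (rule L2I)
  have "(\<lambda>x. (f x + g x)\<^sup>2) = (\<lambda>x. (f x)\<^sup>2 + 2 * (f x * g x) + (g x)\<^sup>2)"
    by (simp add: power2_eq_square algebra_simps)
  then show "integrable M (\<lambda>x. (f x + g x)\<^sup>2)"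
    using assms by (simp add: L2_integrable_power2 integrable_L2_mult)
qed (use assms in measurable)

lemma L2_cmult:
  assumes "f \<in> L2 M"
  shows "(\<lambda>x. c * f x) \<in> L2 M"
  using assms by (intro L2I) (auto simp: L2_def power_mult_distrib)

lemma L2_diff:
  assumes "f \<in> L2 M" "g \<in> L2 M"
  shows "(\<lambda>x. f x - g x) \<in> L2 M"
  using L2_add[OF assms(1) L2_cmult[OF assms(2), of "-1"]] by simp

lemma L2_zero: "(\<lambda>x. 0) \<in> L2 M"
  by (intro L2I) auto

lemma L2_sum:
  "finite I \<Longrightarrow> (\<And>i. i \<in> I \<Longrightarrow> h i \<in> L2 M) \<Longrightarrow> (\<lambda>x. \<Sum>i\<in>I. h i x) \<in> L2 M"
  by (induction I rule: finite_induct) (simp_all add: L2_zero L2_add)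

lemma L2_abs: "f \<in> L2 M \<Longrightarrow> (\<lambda>x. \<bar>f x\<bar>) \<in> L2 M"
  by (intro L2I) (auto simp: L2_def)

lemma L2_integrable: "finite_measure M \<Longrightarrow> f \<in> L2 M \<Longrightarrow> integrable M f"
  by (rule finite_measure.square_integrable_imp_integrable) (auto simp: L2_def)

lemma power2_indicator: "(indicator A x :: real)\<^sup>2 = indicator A x"
  by (simp add: indicator_def)

lemma L2_indicator:
  assumes "finite_measure M" "A \<in> sets M"
  shows "indicator A \<in> L2 M"
proof (rule L2I)
  have "emeasure M A < \<infinity>"
    using finite_measure.emeasure_finite[OF assms(1), of A] by (simp add: top.not_eq_extremum)
  then show "integrable M (\<lambda>x. (indicator A x :: real)\<^sup>2)"
    unfolding power2_indicator using assms(2) by (rule integrable_real_indicator[rotated])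
qed (use assms(2) in measurable)

lemma l2norm_nonneg: "l2norm M f \<ge> 0"
  by (simp add: l2norm_def)

lemma l2norm_power2: "(l2norm M f)\<^sup>2 = (\<integral>x. (f x)\<^sup>2 \<partial>M)"
  by (simp add: l2norm_def)

lemma l2norm_cong_AE:
  assumes "f \<in> borel_measurable M" "g \<in> borel_measurable M" "AE x in M. f x = g x"
  shows "l2norm M f = l2norm M g"
proof -
  have "(\<integral>x. (f x)\<^sup>2 \<partial>M) = (\<integral>x. (g x)\<^sup>2 \<partial>M)"
    by (rule integral_cong_AE) (use assms in auto)
  then show ?thesis by (simp add: l2norm_def)
qed

lemma l2norm_cmult: "l2norm M (\<lambda>x. c * f x) = \<bar>c\<bar> * l2norm M f"
  by (simp add: l2norm_def power_mult_distrib real_sqrt_mult)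

lemma l2norm_abs: "l2norm M (\<lambda>x. \<bar>f x\<bar>) = l2norm M f"
  by (simp add: l2norm_def)

lemma l2norm_indicator: "A \<in> sets M \<Longrightarrow> l2norm M (indicator A) = sqrt (measure M A)"
  by (simp add: l2norm_def power2_indicator)

lemma nonneg_quadratic_imp_discriminant_le:
  fixes A B C :: real
  assumes "B \<ge> 0" "\<And>t. 0 \<le> A - 2 * t * C + t\<^sup>2 * B"
  shows "C\<^sup>2 \<le> A * B"
proof (cases "B = 0")
  case True
  have "C = 0"
  proof (rule ccontr)
    assume "C \<noteq> 0"
    have "0 \<le> A - 2 * ((A + 1) / (2 * C)) * C + ((A + 1) / (2 * C))\<^sup>2 * B" by (rule assms)
    then show False using True \<open>C \<noteq> 0\<close> by (simp add: field_simps)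
  qed
  then show ?thesis using assms(2)[of 0] True by simp
next
  case False
  then have "B > 0" using assms(1) by simp
  have "0 \<le> A - 2 * (C / B) * C + (C / B)\<^sup>2 * B" by (rule assms)
  then show ?thesis using \<open>B > 0\<close> by (simp add: field_simps power2_eq_square)
qed

lemma L2_Cauchy_Schwarz:
  assumes f: "f \<in> L2 M" and g: "g \<in> L2 M"
  shows "\<bar>\<integral>x. f x * g x \<partial>M\<bar> \<le> l2norm M f * l2norm M g"
proof -
  define A where "A = (\<integral>x. (f x)\<^sup>2 \<partial>M)"
  define B where "B = (\<integral>x. (g x)\<^sup>2 \<partial>M)"
  define C where "C = (\<integral>x. f x * g x \<partial>M)"
  have "0 \<le> A - 2 * t * C + t\<^sup>2 * B" for t
  proof -
    have "(\<lambda>x. (f x - t * g x)\<^sup>2) = (\<lambda>x. ((f x)\<^sup>2 - (2 * t) * (f x * g x)) + t\<^sup>2 * (g x)\<^sup>2)"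
      by (simp add: power2_eq_square algebra_simps)
    then have "(\<integral>x. (f x - t * g x)\<^sup>2 \<partial>M) = A - 2 * t * C + t\<^sup>2 * B"
      using f g unfolding A_def B_def C_def
      by (simp add: L2_integrable_power2 integrable_L2_mult)
    moreover have "0 \<le> (\<integral>x. (f x - t * g x)\<^sup>2 \<partial>M)" by simp
    ultimately show ?thesis by simp
  qed
  then have "C\<^sup>2 \<le> A * B" by (intro nonneg_quadratic_imp_discriminant_le) (auto simp: B_def)
  then have "sqrt (C\<^sup>2) \<le> sqrt (A * B)" by (rule real_sqrt_le_mono)
  then show ?thesis unfolding l2norm_def A_def B_def C_def by (simp add: real_sqrt_mult)
qed

lemma l2norm_add_le:
  assumes f: "f \<in> L2 M" and g: "g \<in> L2 M"
  shows "l2norm M (\<lambda>x. f x + g x) \<le> l2norm M f + l2norm M g"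
proof -
  have "(\<lambda>x. (f x + g x)\<^sup>2) = (\<lambda>x. ((f x)\<^sup>2 + 2 * (f x * g x)) + (g x)\<^sup>2)"
    by (simp add: power2_eq_square algebra_simps)
  then have "(\<integral>x. (f x + g x)\<^sup>2 \<partial>M) = (l2norm M f)\<^sup>2 + 2 * (\<integral>x. f x * g x \<partial>M) + (l2norm M g)\<^sup>2"
    using f g by (simp add: L2_integrable_power2 integrable_L2_mult l2norm_power2)
  also have "\<dots> \<le> (l2norm M f)\<^sup>2 + 2 * (l2norm M f * l2norm M g) + (l2norm M g)\<^sup>2"
    using L2_Cauchy_Schwarz[OF f g] by simp
  also have "\<dots> = (l2norm M f + l2norm M g)\<^sup>2"
    by (simp add: power2_eq_square algebra_simps)
  finally have "sqrt (\<integral>x. (f x + g x)\<^sup>2 \<partial>M) \<le> sqrt ((l2norm M f + l2norm M g)\<^sup>2)"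
    by (rule real_sqrt_le_mono)
  then show ?thesis
    using l2norm_nonneg[of M f] l2norm_nonneg[of M g] by (simp add: l2norm_def[of M "\<lambda>x. f x + g x"])
qed

lemma l2norm_diff_le:
  assumes "f \<in> L2 M" "g \<in> L2 M"
  shows "l2norm M (\<lambda>x. f x - g x) \<le> l2norm M f + l2norm M g"
  using l2norm_add_le[OF assms(1) L2_cmult[OF assms(2), of "-1"]] l2norm_cmult[of M "-1" g]
  by simp

lemma l2norm_sum_le:
  "finite I \<Longrightarrow> (\<And>i. i \<in> I \<Longrightarrow> h i \<in> L2 M) \<Longrightarrow>
    l2norm M (\<lambda>x. \<Sum>i\<in>I. h i x) \<le> (\<Sum>i\<in>I. l2norm M (h i))"
proof (induction I rule: finite_induct)
  case empty
  then show ?case by (simp add: l2norm_def)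
next
  case (insert a I)
  have "l2norm M (\<lambda>x. \<Sum>i\<in>insert a I. h i x) = l2norm M (\<lambda>x. h a x + (\<Sum>i\<in>I. h i x))"
    using insert by simp
  also have "\<dots> \<le> l2norm M (h a) + l2norm M (\<lambda>x. \<Sum>i\<in>I. h i x)"
    using insert by (intro l2norm_add_le L2_sum) auto
  also have "\<dots> \<le> l2norm M (h a) + (\<Sum>i\<in>I. l2norm M (h i))"
    using insert by simp
  finally show ?case using insert by simp
qed

lemma nn_integral_power2_L2:
  "f \<in> L2 M \<Longrightarrow> (\<integral>\<^sup>+x. ennreal ((f x)\<^sup>2) \<partial>M) = ennreal ((l2norm M f)\<^sup>2)"
  by (simp add: l2norm_power2 nn_integral_eq_integral L2_def)

lemma AE_summable_abs_of_summable_l2norm: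
  assumes h: "\<And>n. h n \<in> L2 M" and S: "summable (\<lambda>n. l2norm M (h n))"
  shows "AE x in M. summable (\<lambda>n. \<bar>h n x\<bar>)"
proof -
  define T where "T = (\<Sum>n. l2norm M (h n))"
  define G where "G m x = (\<Sum>n<m. \<bar>h n x\<bar>)" for m x
  have [measurable]: "h n \<in> borel_measurable M" for n using h by auto
  have [measurable]: "G m \<in> borel_measurable M" for m unfolding G_def by measurable
  have G: "G m \<in> L2 M" for m unfolding G_def[abs_def] using h by (intro L2_sum L2_abs) auto
  have "l2norm M (G m) \<le> T" for m
  proof -
    have "l2norm M (G m) \<le> (\<Sum>n<m. l2norm M (\<lambda>x. \<bar>h n x\<bar>))"
      unfolding G_def using h by (intro l2norm_sum_le L2_abs) auto
    also have "\<dots> \<le> T"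
      unfolding T_def l2norm_abs using S l2norm_nonneg by (intro sum_le_suminf) auto
    finally show ?thesis .
  qed
  then have GT: "(\<integral>\<^sup>+x. ennreal ((G m x)\<^sup>2) \<partial>M) \<le> ennreal (T\<^sup>2)" for m
    unfolding nn_integral_power2_L2[OF G] by (intro ennreal_leI power_mono l2norm_nonneg)
  have "incseq (\<lambda>m x. ennreal ((G m x)\<^sup>2))"
    by (auto simp: incseq_def le_fun_def G_def intro!: ennreal_leI power_mono sum_mono2)
  then have "(\<integral>\<^sup>+x. (SUP m. ennreal ((G m x)\<^sup>2)) \<partial>M) = (SUP m. (\<integral>\<^sup>+x. ennreal ((G m x)\<^sup>2) \<partial>M))"
    by (rule nn_integral_monotone_convergence_SUP) measurable
  also have "\<dots> \<le> ennreal (T\<^sup>2)" by (rule SUP_least) (rule GT)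
  finally have "(\<integral>\<^sup>+x. (SUP m. ennreal ((G m x)\<^sup>2)) \<partial>M) \<noteq> \<infinity>"
    using ennreal_neq_top top.extremum_uniqueI by (metis infinity_ennreal_def)
  then have "AE x in M. (SUP m. ennreal ((G m x)\<^sup>2)) \<noteq> \<infinity>"
    by (intro nn_integral_noteq_infinite) measurable
  then show ?thesis
  proof eventually_elim
    case (elim x)
    define B where "B = enn2real (SUP m. ennreal ((G m x)\<^sup>2))"
    have "(G m x)\<^sup>2 \<le> B" for m
    proof -
      have "ennreal ((G m x)\<^sup>2) \<le> (SUP m. ennreal ((G m x)\<^sup>2))" by (rule SUP_upper) auto
      then have "enn2real (ennreal ((G m x)\<^sup>2)) \<le> B"
        unfolding B_def by (rule enn2real_mono) (use elim in \<open>auto simp: less_top[symmetric]\<close>)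
      then show ?thesis by simp
    qed
    then have "G m x \<le> sqrt B" for m by (intro real_le_rsqrt) auto
    then show ?case unfolding G_def by (intro summableI_nonneg_bounded) auto
  qed
qed

lemma L2_limit:
  assumes P: "\<And>m. P m \<in> L2 M" "\<And>m. l2norm M (P m) \<le> T"
    and lim: "AE x in M. (\<lambda>m. P m x) \<longlonglongrightarrow> H x" and H: "H \<in> borel_measurable M"
  shows "H \<in> L2 M \<and> l2norm M H \<le> T"
proof -
  have [measurable]: "P m \<in> borel_measurable M" for m using P(1) by (rule L2_borel_measurable)
  have [measurable]: "H \<in> borel_measurable M" by (rule H)
  have T: "0 \<le> T" using P(2)[of 0] l2norm_nonneg[of M "P 0"] by linarith
  have bound: "(\<integral>\<^sup>+x. ennreal ((P m x)\<^sup>2) \<partial>M) \<le> ennreal (T\<^sup>2)" for m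
    unfolding nn_integral_power2_L2[OF P(1)] by (intro ennreal_leI power_mono P(2) l2norm_nonneg)
  have "AE x in M. liminf (\<lambda>m. ennreal ((P m x)\<^sup>2)) = ennreal ((H x)\<^sup>2)"
    using lim
  proof eventually_elim
    case (elim x)
    then have "(\<lambda>m. ennreal ((P m x)\<^sup>2)) \<longlonglongrightarrow> ennreal ((H x)\<^sup>2)"
      by (intro tendsto_ennrealI tendsto_power)
    then show ?case by (intro lim_imp_Liminf) auto
  qed
  then have "(\<integral>\<^sup>+x. ennreal ((H x)\<^sup>2) \<partial>M) = (\<integral>\<^sup>+x. liminf (\<lambda>m. ennreal ((P m x)\<^sup>2)) \<partial>M)"
    by (intro nn_integral_cong_AE) auto
  also have "\<dots> \<le> liminf (\<lambda>m. (\<integral>\<^sup>+x. ennreal ((P m x)\<^sup>2) \<partial>M))"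
    by (rule nn_integral_liminf) measurable
  also have "\<dots> \<le> limsup (\<lambda>m. (\<integral>\<^sup>+x. ennreal ((P m x)\<^sup>2) \<partial>M))"
    by (rule Liminf_le_Limsup) simp
  also have "\<dots> \<le> ennreal (T\<^sup>2)"
    by (rule Limsup_bounded) (use bound in auto)
  finally have HT: "(\<integral>\<^sup>+x. ennreal ((H x)\<^sup>2) \<partial>M) \<le> ennreal (T\<^sup>2)" .
  have int: "integrable M (\<lambda>x. (H x)\<^sup>2)"
  proof (rule integrableI_bounded)
    have "(\<integral>\<^sup>+x. ennreal (norm ((H x)\<^sup>2)) \<partial>M) = (\<integral>\<^sup>+x. ennreal ((H x)\<^sup>2) \<partial>M)" by simp
    also have "\<dots> < \<infinity>" using HT by (metis ennreal_less_top infinity_ennreal_def order_le_less_trans)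
    finally show "(\<integral>\<^sup>+x. ennreal (norm ((H x)\<^sup>2)) \<partial>M) < \<infinity>" .
  qed measurable
  have "(\<integral>x. (H x)\<^sup>2 \<partial>M) \<le> T\<^sup>2"
    using HT int by (simp add: nn_integral_eq_integral)
  then have "l2norm M H \<le> sqrt (T\<^sup>2)" unfolding l2norm_def by (rule real_sqrt_le_mono)
  with T int show ?thesis by (simp add: L2I)
qed

lemma L2_suminf:
  assumes h: "\<And>n. h n \<in> L2 M" and S: "summable (\<lambda>n. l2norm M (h n))"
  shows "(\<lambda>x. \<Sum>n. h n x) \<in> L2 M" "l2norm M (\<lambda>x. \<Sum>n. h n x) \<le> (\<Sum>n. l2norm M (h n))"
proof -
  have [measurable]: "h n \<in> borel_measurable M" for n using h by auto
  have "(\<lambda>x. \<Sum>n<m. h n x) \<in> L2 M" for m using h by (intro L2_sum) auto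
  moreover have "l2norm M (\<lambda>x. \<Sum>n<m. h n x) \<le> (\<Sum>n. l2norm M (h n))" for m
  proof -
    have "l2norm M (\<lambda>x. \<Sum>n<m. h n x) \<le> (\<Sum>n<m. l2norm M (h n))"
      using h by (intro l2norm_sum_le) auto
    also have "\<dots> \<le> (\<Sum>n. l2norm M (h n))"
      using S l2norm_nonneg by (intro sum_le_suminf) auto
    finally show ?thesis .
  qed
  moreover have "AE x in M. (\<lambda>m. \<Sum>n<m. h n x) \<longlonglongrightarrow> (\<Sum>n. h n x)"
    using AE_summable_abs_of_summable_l2norm[OF h S]
    by eventually_elim (rule summable_LIMSEQ, rule summable_rabs_cancel)
  moreover have "(\<lambda>x. \<Sum>n. h n x) \<in> borel_measurable M" by measurable
  ultimately have "(\<lambda>x. \<Sum>n. h n x) \<in> L2 M \<and> l2norm M (\<lambda>x. \<Sum>n. h n x) \<le> (\<Sum>n. l2norm M (h n))"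
    by (rule L2_limit[where P="\<lambda>m x. \<Sum>n<m. h n x"])
  then show "(\<lambda>x. \<Sum>n. h n x) \<in> L2 M" "l2norm M (\<lambda>x. \<Sum>n. h n x) \<le> (\<Sum>n. l2norm M (h n))"
    by auto
qed

section \<open>Conditional expectations and cylinder step functions\<close>

lemma real_cond_exp_L2:
  assumes F: "finite_measure_subalgebra M F" and f: "f \<in> L2 M"
  shows "real_cond_exp M F f \<in> L2 M" "l2norm M (real_cond_exp M F f) \<le> l2norm M f"
proof -
  interpret finite_measure_subalgebra M F by (rule F)
  have fi: "integrable M f" and qi: "integrable M (\<lambda>x. (f x)\<^sup>2)"
    using f finite_measure_axioms by (auto simp: L2_integrable L2_integrable_power2)
  have J: "AE x in M. (real_cond_exp M F f x)\<^sup>2 \<le> real_cond_exp M F (\<lambda>x. (f x)\<^sup>2) x"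
    using real_cond_exp_jensens_inequality(2)[of f UNIV 0 0 power2] fi qi convex_power2 by auto
  have ci: "integrable M (real_cond_exp M F (\<lambda>x. (f x)\<^sup>2))"
    using real_cond_exp_int(1)[OF qi] .
  have int2: "integrable M (\<lambda>x. (real_cond_exp M F f x)\<^sup>2)"
    by (rule Bochner_Integration.integrable_bound[OF ci]) (use J in auto)
  then show "real_cond_exp M F f \<in> L2 M" by (intro L2I) auto
  have "(\<integral>x. (real_cond_exp M F f x)\<^sup>2 \<partial>M) \<le> (\<integral>x. real_cond_exp M F (\<lambda>x. (f x)\<^sup>2) x \<partial>M)"
    by (rule integral_mono_AE[OF int2 ci J])
  also have "\<dots> = (\<integral>x. (f x)\<^sup>2 \<partial>M)" using real_cond_exp_int(2)[OF qi] .
  finally show "l2norm M (real_cond_exp M F f) \<le> l2norm M f"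
    unfolding l2norm_def by (rule real_sqrt_le_mono)
qed

lemma integral_real_cond_exp_mult_self:
  assumes F: "finite_measure_subalgebra M F" and f: "f \<in> L2 M"
  shows "(\<integral>x. real_cond_exp M F f x * f x \<partial>M) = (\<integral>x. (real_cond_exp M F f x)\<^sup>2 \<partial>M)"
proof -
  interpret finite_measure_subalgebra M F by (rule F)
  have "integrable M (\<lambda>x. real_cond_exp M F f x * f x)"
    using integrable_L2_mult real_cond_exp_L2[OF F f] f by blast
  then have "(\<integral>x. real_cond_exp M F f x * real_cond_exp M F f x \<partial>M)
      = (\<integral>x. real_cond_exp M F f x * f x \<partial>M)"
    using f by (intro real_cond_exp_intg(2)) auto
  then show ?thesis by (simp add: power2_eq_square)
qed

definition cylinder_step :: "nat list set \<Rightarrow> (nat list \<Rightarrow> real) \<Rightarrow> real \<Rightarrow> real" where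
  "cylinder_step W c x = (\<Sum>w\<in>W. c w * indicator (Cw w) x)"

lemma cylinder_step_eq_coeff:
  assumes "w0 \<in> words n" "x \<in> Cw w0"
  shows "cylinder_step (words n) c x = c w0"
proof -
  have "cylinder_step (words n) c x
      = c w0 * indicator (Cw w0) x + (\<Sum>w\<in>words n - {w0}. c w * indicator (Cw w) x)"
    unfolding cylinder_step_def by (rule sum.remove[OF finite_words assms(1)])
  also have "(\<Sum>w\<in>words n - {w0}. c w * indicator (Cw w) x) = 0"
    using Cw_disjoint assms by (intro sum.neutral) (auto simp: indicator_def)
  finally show ?thesis using assms by simp
qed

lemma power2_cylinder_step:
  "(cylinder_step (words n) c x)\<^sup>2 = cylinder_step (words n) (\<lambda>w. (c w)\<^sup>2) x"
proof (cases "\<exists>w\<in>words n. x \<in> Cw w")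
  case True
  then show ?thesis by (auto simp: cylinder_step_eq_coeff)
next
  case False
  then show ?thesis by (auto simp: cylinder_step_def indicator_def intro!: sum.neutral)
qed

definition cylinder_point :: "nat list \<Rightarrow> real" where
  "cylinder_point w = (SOME x. x \<in> Cw w)"

context cantor_measure
begin

lemma cylinder_point_in_Cw: "w \<in> words n \<Longrightarrow> cylinder_point w \<in> Cw w"
  unfolding cylinder_point_def using Cw_nonempty by (simp add: some_in_eq)

lemma cylinder_step_borel_measurable [measurable]:
  assumes "W \<subseteq> (\<Union>n. words n)"
  shows "cylinder_step W c \<in> borel_measurable M"
  unfolding cylinder_step_def[abs_def]
proof (rule borel_measurable_sum)
  fix w assume "w \<in> W"
  then have [measurable]: "Cw w \<in> sets M" using assms Cw_in_sets by blast
  show "(\<lambda>x. c w * indicator (Cw w) x) \<in> borel_measurable M" by measurable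
qed

lemma L2_cylinder_step:
  assumes "finite W" "W \<subseteq> (\<Union>n. words n)"
  shows "cylinder_step W c \<in> L2 M"
  unfolding cylinder_step_def[abs_def]
  using assms Cw_in_sets by (intro L2_sum L2_cmult L2_indicator[OF finite_measure]) auto

lemma l2norm_cylinder_step_le:
  assumes "finite W" "W \<subseteq> (\<Union>n. words n)"
  shows "l2norm M (cylinder_step W c) \<le> (\<Sum>w\<in>W. \<bar>c w\<bar>)"
proof -
  have "l2norm M (cylinder_step W c) \<le> (\<Sum>w\<in>W. l2norm M (\<lambda>x. c w * indicator (Cw w) x))"
    unfolding cylinder_step_def[abs_def]
    using assms Cw_in_sets by (intro l2norm_sum_le L2_cmult L2_indicator[OF finite_measure]) auto
  also have "\<dots> \<le> (\<Sum>w\<in>W. \<bar>c w\<bar>)"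
    using assms Cw_in_sets by (intro sum_mono)
      (auto simp: l2norm_cmult l2norm_indicator intro!: mult_left_le)
  finally show ?thesis .
qed

lemma integral_power2_cylinder_step:
  "(\<integral>x. (cylinder_step (words n) c x)\<^sup>2 \<partial>M) = (\<Sum>w\<in>words n. (c w)\<^sup>2) * (1/2) ^ n"
proof -
  have "(\<integral>x. (cylinder_step (words n) c x)\<^sup>2 \<partial>M)
      = (\<Sum>w\<in>words n. (\<integral>x. (c w)\<^sup>2 * indicator (Cw w) x \<partial>M))"
    unfolding power2_cylinder_step unfolding cylinder_step_def
    by (rule Bochner_Integration.integral_sum)
       (auto intro!: integrable_real_indicator Cw_in_sets simp: emeasure_eq_measure)
  also have "\<dots> = (\<Sum>w\<in>words n. (c w)\<^sup>2 * (1/2) ^ n)"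
    using Cw_in_sets measure_Cw by (intro sum.cong) auto
  finally show ?thesis by (simp add: sum_distrib_right)
qed

lemma sets_Fn: "sets (Fn M n) = sigma_sets (space M) (Cw ` words n)"
  unfolding Fn_def using Cw_subset_space by (intro sets_measure_of) auto

lemma space_Fn: "space (Fn M n) = space M"
  unfolding Fn_def using Cw_subset_space by (intro space_measure_of) auto

lemma finite_measure_subalgebra_Fn: "finite_measure_subalgebra M (Fn M n)"
proof -
  have "sigma_sets (space M) (Cw ` words n) \<subseteq> sets M"
    by (rule sets.sigma_sets_subset) (auto simp: Cw_in_sets)
  then have "subalgebra M (Fn M n)"
    unfolding subalgebra_def using space_Fn sets_Fn by auto
  then show ?thesis
    by (simp add: finite_measure_subalgebra_def finite_measure_subalgebra_axioms_def finite_measure_axioms)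
qed

lemma cylinder_step_measurable_Fn: "cylinder_step (words n) c \<in> borel_measurable (Fn M n)"
  unfolding cylinder_step_def[abs_def]
proof (rule borel_measurable_sum)
  fix w assume "w \<in> words n"
  then have [measurable]: "Cw w \<in> sets (Fn M n)" by (simp add: sets_Fn)
  show "(\<lambda>x. c w * indicator (Cw w) x) \<in> borel_measurable (Fn M n)" by measurable
qed

text \<open>The generators \<open>C\<^sub>w\<close> are disjoint, so every set of \<open>Fn M n\<close> is a union of whole cylinders.\<close>
lemma Fn_sets_saturated:
  assumes "A \<in> sigma_sets (space M) (Cw ` words n)" "w \<in> words n" "x \<in> Cw w" "y \<in> Cw w"
  shows "x \<in> A \<longleftrightarrow> y \<in> A"
  using assms(1)
proof (induction rule: sigma_sets.induct)
  case (Basic a)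
  then obtain w' where "w' \<in> words n" "a = Cw w'" by auto
  then show ?case using Cw_disjoint assms by blast
next
  case (Compl a)
  have "x \<in> space M" "y \<in> space M" using Cw_subset_space assms by auto
  then show ?case using Compl by auto
qed auto

lemma Fn_measurable_const_on_Cw:
  fixes g :: "real \<Rightarrow> real"
  assumes "g \<in> borel_measurable (Fn M n)" "w \<in> words n" "x \<in> Cw w" "y \<in> Cw w"
  shows "g x = g y"
proof -
  have "g -` {g x} \<inter> space (Fn M n) \<in> sets (Fn M n)"
    using assms(1) by (rule measurable_sets) (auto intro: borel_closed)
  moreover have "x \<in> space M" using Cw_subset_space assms by auto
  ultimately show ?thesis
    using Fn_sets_saturated[OF _ assms(2-4), of "g -` {g x} \<inter> space M"]
    by (simp add: sets_Fn space_Fn)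
qed

lemma Fn_measurable_AE_eq_cylinder_step:
  fixes g :: "real \<Rightarrow> real"
  assumes "g \<in> borel_measurable (Fn M n)"
  shows "AE x in M. g x = cylinder_step (words n) (\<lambda>w. g (cylinder_point w)) x"
  using AE_in_cylinder[of n]
proof eventually_elim
  case (elim x)
  then obtain w where w: "w \<in> words n" "x \<in> Cw w" by auto
  then have "g x = g (cylinder_point w)"
    using Fn_measurable_const_on_Cw[OF assms w cylinder_point_in_Cw[OF w(1)]] by simp
  then show ?case using cylinder_step_eq_coeff[OF w] by simp
qed

lemma En_borel_measurable [measurable]: "En M n f \<in> borel_measurable M"
  by (simp add: En_def)

lemma En_measurable_Fn: "En M n f \<in> borel_measurable (Fn M n)"
  by (simp add: En_def)

lemma En_L2:
  assumes "f \<in> L2 M"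
  shows "En M n f \<in> L2 M" "l2norm M (En M n f) \<le> l2norm M f"
proof -
  show "En M n f \<in> L2 M" "l2norm M (En M n f) \<le> l2norm M f"
    unfolding En_def using real_cond_exp_L2[OF finite_measure_subalgebra_Fn assms] by auto
qed

lemma En_linear_AE:
  assumes "f \<in> L2 M" "g \<in> L2 M"
  shows "AE x in M. En M n (\<lambda>y. a * f y + b * g y) x = a * En M n f x + b * En M n g x"
proof -
  interpret finite_measure_subalgebra M "Fn M n" by (rule finite_measure_subalgebra_Fn)
  have fi: "integrable M f" "integrable M g" using L2_integrable[OF finite_measure] assms by auto
  have "AE x in M. En M n (\<lambda>y. a * f y + b * g y) x = En M n (\<lambda>y. a * f y) x + En M n (\<lambda>y. b * g y) x"
    unfolding En_def using fi by (intro real_cond_exp_add) auto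
  moreover have "AE x in M. En M n (\<lambda>y. a * f y) x = a * En M n f x"
    "AE x in M. En M n (\<lambda>y. b * g y) x = b * En M n g x"
    unfolding En_def using fi by auto
  ultimately show ?thesis by eventually_elim simp
qed

lemma En_cong_AE:
  assumes "f \<in> borel_measurable M" "g \<in> borel_measurable M" "AE x in M. f x = g x"
  shows "AE x in M. En M n f x = En M n g x"
proof -
  interpret finite_measure_subalgebra M "Fn M n" by (rule finite_measure_subalgebra_Fn)
  show ?thesis unfolding En_def using assms by (intro real_cond_exp_cong) auto
qed

lemma En_eq_self_AE:
  assumes "g \<in> L2 M" "g \<in> borel_measurable (Fn M n)"
  shows "AE x in M. En M n g x = g x"
proof -
  interpret finite_measure_subalgebra M "Fn M n" by (rule finite_measure_subalgebra_Fn)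
  show ?thesis unfolding En_def using assms L2_integrable[OF finite_measure] by auto
qed

lemma integral_En_mult_self:
  assumes "f \<in> L2 M"
  shows "(\<integral>x. En M n f x * f x \<partial>M) = (\<integral>x. (En M n f x)\<^sup>2 \<partial>M)"
proof -
  show ?thesis unfolding En_def
    by (rule integral_real_cond_exp_mult_self[OF finite_measure_subalgebra_Fn assms])
qed

end

section \<open>The operator \<open>K\<^sub>\<infinity>\<close> and its truncations\<close>

definition Ktrunc :: "real measure \<Rightarrow> nat \<Rightarrow> (real \<Rightarrow> real) \<Rightarrow> real \<Rightarrow> real" where
  "Ktrunc M N f x = (\<Sum>n<N. (1/2) ^ n * En M n f x)"

definition words_below :: "nat \<Rightarrow> nat list set" where
  "words_below N = (\<Union>n<N. words n)"

text \<open>Any point of \<open>Cw w\<close> would do: \<open>En M (length w) f\<close> is constant on \<open>Cw w\<close>.\<close>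
definition Kcoeff :: "real measure \<Rightarrow> (real \<Rightarrow> real) \<Rightarrow> nat list \<Rightarrow> real" where
  "Kcoeff M f w = (1/2) ^ length w * En M (length w) f (cylinder_point w)"

lemma finite_words_below: "finite (words_below N)"
  unfolding words_below_def using finite_words by auto

lemma words_below_subset: "words_below N \<subseteq> (\<Union>n. words n)"
  unfolding words_below_def by auto

lemma card_words_below_less: "card (words_below N) < 2 ^ N"
proof -
  have "card (words_below N) \<le> (\<Sum>n<N. card (words n))"
    unfolding words_below_def using finite_words by (intro card_UN_le) auto
  also have "\<dots> = (\<Sum>n<N. 2 ^ n)" by (simp add: card_words)
  also have "\<dots> < 2 ^ N" by (induction N) auto
  finally show ?thesis .
qed

lemma sums_half_power_shift: "(\<lambda>n. (1/2::real) ^ (n + N) * c) sums (2 * (1/2) ^ N * c)"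
proof -
  have "(\<lambda>n. (1/2::real) ^ n * ((1/2) ^ N * c)) sums (2 * ((1/2) ^ N * c))"
    using sums_mult2[OF geometric_sums[of "1/2::real"], of "(1/2) ^ N * c"] by simp
  then show ?thesis by (simp add: power_add mult_ac)
qed

lemma rank_le_of_finite_span:
  assumes F: "lin_op M F" and W: "finite W" "card W \<le> k"
    and \<phi>: "\<And>w. w \<in> W \<Longrightarrow> \<phi> w \<in> L2 M"
    and span: "\<And>f. f \<in> L2 M \<Longrightarrow> \<exists>c. AE x in M. F f x = (\<Sum>w\<in>W. c w * \<phi> w x)"
  shows "rank_le M k F"
proof -
  obtain e where e: "bij_betw e {0..<card W} W" using ex_bij_betw_nat_finite[OF W(1)] by blast
  define g where "g i = (if i < card W then \<phi> (e i) else (\<lambda>x. 0))" for i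
  have "g i \<in> L2 M" for i
    using \<phi> bij_betw_apply[OF e] L2_zero unfolding g_def by auto
  moreover have "\<exists>c'. AE x in M. F f x = (\<Sum>i<k. c' i * g i x)" if f: "f \<in> L2 M" for f
  proof -
    obtain c where c: "AE x in M. F f x = (\<Sum>w\<in>W. c w * \<phi> w x)" using span[OF f] by blast
    define c' where "c' i = (if i < card W then c (e i) else 0)" for i
    have "(\<Sum>i<k. c' i * g i x) = (\<Sum>w\<in>W. c w * \<phi> w x)" for x
    proof -
      have "(\<Sum>i<k. c' i * g i x) = (\<Sum>i\<in>{0..<card W}. c (e i) * \<phi> (e i) x)"
        using W(2) by (intro sum.mono_neutral_cong_right) (auto simp: c'_def g_def)
      also have "\<dots> = (\<Sum>w\<in>W. c w * \<phi> w x)"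
        by (rule sum.reindex_bij_betw[OF e])
      finally show ?thesis .
    qed
    then show ?thesis using c by (intro exI[of _ c']) simp
  qed
  ultimately show ?thesis unfolding rank_le_def using F by blast
qed

context cantor_measure
begin

lemma Kinf_tail_series:
  assumes f: "f \<in> L2 M"
  shows "AE x in M. summable (\<lambda>n. \<bar>(1/2) ^ (n + N) * En M (n + N) f x\<bar>)"
    and "(\<lambda>x. \<Sum>n. (1/2) ^ (n + N) * En M (n + N) f x) \<in> L2 M"
    and "l2norm M (\<lambda>x. \<Sum>n. (1/2) ^ (n + N) * En M (n + N) f x) \<le> 2 * (1/2) ^ N * l2norm M f"
proof -
  let ?h = "\<lambda>n x. (1/2) ^ (n + N) * En M (n + N) f x"
  have h: "?h n \<in> L2 M" for n using f by (intro L2_cmult En_L2)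
  have hn: "l2norm M (?h n) \<le> (1/2) ^ (n + N) * l2norm M f" for n
    using En_L2(2)[OF f, of "n + N"] by (simp add: l2norm_cmult mult_left_mono)
  have geo: "(\<lambda>n. (1/2) ^ (n + N) * l2norm M f) sums (2 * (1/2) ^ N * l2norm M f)"
    by (rule sums_half_power_shift)
  have S: "summable (\<lambda>n. l2norm M (?h n))"
    using hn l2norm_nonneg by (intro summable_comparison_test[OF _ sums_summable[OF geo]]) auto
  show "AE x in M. summable (\<lambda>n. \<bar>?h n x\<bar>)" by (rule AE_summable_abs_of_summable_l2norm[OF h S])
  show "(\<lambda>x. \<Sum>n. ?h n x) \<in> L2 M" by (rule L2_suminf(1)[OF h S])
  have "l2norm M (\<lambda>x. \<Sum>n. ?h n x) \<le> (\<Sum>n. l2norm M (?h n))" by (rule L2_suminf(2)[OF h S])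
  also have "\<dots> \<le> 2 * (1/2) ^ N * l2norm M f"
    using suminf_le[OF hn S sums_summable[OF geo]] sums_unique[OF geo] by simp
  finally show "l2norm M (\<lambda>x. \<Sum>n. ?h n x) \<le> 2 * (1/2) ^ N * l2norm M f" .
qed

lemma Kinf_summable_AE:
  assumes "f \<in> L2 M"
  shows "AE x in M. summable (\<lambda>n. (1/2) ^ n * En M n f x)"
  using Kinf_tail_series(1)[OF assms, of 0] by eventually_elim (rule summable_rabs_cancel, simp)

lemma L2_Kinf: "f \<in> L2 M \<Longrightarrow> Kinf M f \<in> L2 M"
  using Kinf_tail_series(2)[of f 0] by (simp add: Kinf_def[abs_def])

lemma Kinf_borel_measurable [measurable]: "Kinf M f \<in> borel_measurable M"
  unfolding Kinf_def[abs_def] by measurable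

lemma Ktrunc_borel_measurable [measurable]: "Ktrunc M N f \<in> borel_measurable M"
  unfolding Ktrunc_def[abs_def] by measurable

lemma L2_Ktrunc: "f \<in> L2 M \<Longrightarrow> Ktrunc M N f \<in> L2 M"
  unfolding Ktrunc_def[abs_def] by (intro L2_sum L2_cmult En_L2) auto

lemma Kinf_minus_Ktrunc:
  assumes f: "f \<in> L2 M"
  shows "(\<lambda>x. Kinf M f x - Ktrunc M N f x) \<in> L2 M"
    and "l2norm M (\<lambda>x. Kinf M f x - Ktrunc M N f x) \<le> 2 * (1/2) ^ N * l2norm M f"
proof -
  show "(\<lambda>x. Kinf M f x - Ktrunc M N f x) \<in> L2 M"
    using L2_Kinf[OF f] L2_Ktrunc[OF f] by (rule L2_diff)
  have "AE x in M. Kinf M f x - Ktrunc M N f x = (\<Sum>n. (1/2) ^ (n + N) * En M (n + N) f x)"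
    using Kinf_summable_AE[OF f]
    by eventually_elim (simp add: Kinf_def Ktrunc_def suminf_split_initial_segment[of _ N])
  then have "l2norm M (\<lambda>x. Kinf M f x - Ktrunc M N f x)
      = l2norm M (\<lambda>x. \<Sum>n. (1/2) ^ (n + N) * En M (n + N) f x)"
    by (intro l2norm_cong_AE) auto
  then show "l2norm M (\<lambda>x. Kinf M f x - Ktrunc M N f x) \<le> 2 * (1/2) ^ N * l2norm M f"
    using Kinf_tail_series(3)[OF f, of N] by simp
qed

lemma En_linear_AE_all:
  assumes "f \<in> L2 M" "g \<in> L2 M"
  shows "AE x in M. \<forall>n. En M n (\<lambda>y. a * f y + b * g y) x = a * En M n f x + b * En M n g x"
  unfolding AE_all_countable using En_linear_AE[OF assms] by auto

lemma En_cong_AE_all: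
  assumes "f \<in> L2 M" "g \<in> L2 M" "AE x in M. f x = g x"
  shows "AE x in M. \<forall>n. En M n f x = En M n g x"
  unfolding AE_all_countable using En_cong_AE assms by auto

lemma lin_op_Kinf: "lin_op M (Kinf M)"
  unfolding lin_op_def
proof (intro conjI ballI allI impI)
  fix f g a b assume f: "f \<in> L2 M" and g: "g \<in> L2 M"
  show "AE x in M. Kinf M (\<lambda>y. a * f y + b * g y) x = a * Kinf M f x + b * Kinf M g x"
    using En_linear_AE_all[OF f g, where a=a and b=b] Kinf_summable_AE[OF f] Kinf_summable_AE[OF g]
  proof eventually_elim
    case (elim x)
    have "Kinf M (\<lambda>y. a * f y + b * g y) x
        = (\<Sum>n. a * ((1/2) ^ n * En M n f x) + b * ((1/2) ^ n * En M n g x))"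
      unfolding Kinf_def using elim(1) by (simp add: algebra_simps)
    also have "\<dots> = a * Kinf M f x + b * Kinf M g x"
      unfolding Kinf_def using elim(2,3)
      by (simp add: suminf_add[symmetric] summable_mult suminf_mult)
    finally show ?case .
  qed
next
  fix f g assume "f \<in> L2 M" "g \<in> L2 M" "AE x in M. f x = g x"
  from En_cong_AE_all[OF this] show "AE x in M. Kinf M f x = Kinf M g x"
    by eventually_elim (simp add: Kinf_def)
qed (rule L2_Kinf)

lemma lin_op_Ktrunc: "lin_op M (Ktrunc M N)"
  unfolding lin_op_def
proof (intro conjI ballI allI impI)
  fix f g a b assume "f \<in> L2 M" "g \<in> L2 M"
  from En_linear_AE_all[OF this, where a=a and b=b]
  show "AE x in M. Ktrunc M N (\<lambda>y. a * f y + b * g y) x = a * Ktrunc M N f x + b * Ktrunc M N g x"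
    by eventually_elim (simp add: Ktrunc_def algebra_simps sum.distrib sum_distrib_left)
next
  fix f g assume "f \<in> L2 M" "g \<in> L2 M" "AE x in M. f x = g x"
  from En_cong_AE_all[OF this] show "AE x in M. Ktrunc M N f x = Ktrunc M N g x"
    by eventually_elim (simp add: Ktrunc_def)
qed (rule L2_Ktrunc)

lemma Ktrunc_AE_eq_cylinder_step:
  "AE x in M. Ktrunc M N f x = cylinder_step (words_below N) (Kcoeff M f) x"
proof -
  have "AE x in M. \<forall>n. En M n f x = cylinder_step (words n) (\<lambda>w. En M n f (cylinder_point w)) x"
    unfolding AE_all_countable using Fn_measurable_AE_eq_cylinder_step En_measurable_Fn by blast
  then show ?thesis
  proof eventually_elim
    case (elim x)
    have "Ktrunc M N f x = (\<Sum>n<N. \<Sum>w\<in>words n. Kcoeff M f w * indicator (Cw w) x)"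
      unfolding Ktrunc_def using elim
      by (intro sum.cong refl)
         (auto simp: cylinder_step_def sum_distrib_left Kcoeff_def words_def mult_ac intro!: sum.cong)
    also have "\<dots> = cylinder_step (words_below N) (Kcoeff M f) x"
      unfolding cylinder_step_def words_below_def
      by (rule sum.UNION_disjoint[symmetric]) (use finite_words in \<open>auto simp: words_def\<close>)
    finally show ?case .
  qed
qed

lemma rank_le_Ktrunc:
  assumes "2 ^ N \<le> k + 1"
  shows "rank_le M k (Ktrunc M N)"
proof (rule rank_le_of_finite_span[OF lin_op_Ktrunc finite_words_below])
  show "card (words_below N) \<le> k" using card_words_below_less[of N] assms by linarith
  show "indicator (Cw w) \<in> L2 M" if "w \<in> words_below N" for w
    using that words_below_subset Cw_in_sets L2_indicator[OF finite_measure] by blast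
  show "\<exists>c. AE x in M. Ktrunc M N f x = (\<Sum>w\<in>words_below N. c w * indicator (Cw w) x)" for f
    using Ktrunc_AE_eq_cylinder_step unfolding cylinder_step_def by blast
qed

lemma abs_Kcoeff_le_1:
  assumes f: "f \<in> L2 M" "l2norm M f \<le> 1" and w: "w \<in> words n"
  shows "\<bar>Kcoeff M f w\<bar> \<le> 1"
proof -
  let ?c = "\<lambda>v. En M n f (cylinder_point v)"
  have [measurable]: "cylinder_step (words n) ?c \<in> borel_measurable M"
    by (rule cylinder_step_borel_measurable) auto
  have "AE x in M. En M n f x = cylinder_step (words n) ?c x"
    by (rule Fn_measurable_AE_eq_cylinder_step[OF En_measurable_Fn])
  then have "(l2norm M (En M n f))\<^sup>2 = (\<integral>x. (cylinder_step (words n) ?c x)\<^sup>2 \<partial>M)"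
    unfolding l2norm_power2 by (intro integral_cong_AE) auto
  also have "\<dots> = (\<Sum>v\<in>words n. (?c v)\<^sup>2) * (1/2) ^ n"
    by (rule integral_power2_cylinder_step)
  finally have eq: "(l2norm M (En M n f))\<^sup>2 = (\<Sum>v\<in>words n. (?c v)\<^sup>2) * (1/2) ^ n" .
  have "(?c w)\<^sup>2 \<le> (\<Sum>v\<in>words n. (?c v)\<^sup>2)"
    using w by (intro member_le_sum) (auto simp: finite_words)
  then have "(?c w)\<^sup>2 * (1/2) ^ n \<le> (l2norm M (En M n f))\<^sup>2"
    unfolding eq by (simp add: mult_right_mono)
  also have "\<dots> \<le> 1"
    using En_L2(2)[OF f(1), of n] f(2) l2norm_nonneg[of M "En M n f"] by (simp add: abs_square_le_1)
  finally have le1: "(?c w)\<^sup>2 * (1/2) ^ n \<le> 1" .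
  have "(Kcoeff M f w)\<^sup>2 = ((?c w)\<^sup>2 * (1/2) ^ n) * (1/2) ^ n"
    using w by (simp add: Kcoeff_def words_def power_mult_distrib power2_eq_square)
  also have "\<dots> \<le> 1 * 1"
    using le1 by (intro mult_mono) (simp_all add: power_le_one)
  finally show ?thesis by (simp add: abs_square_le_1)
qed

lemma l2norm_Kinf_diff_le:
  assumes f: "f \<in> L2 M" "l2norm M f \<le> 1" and g: "g \<in> L2 M" "l2norm M g \<le> 1"
  shows "l2norm M (\<lambda>x. Kinf M f x - Kinf M g x)
    \<le> 4 * (1/2) ^ N + (\<Sum>w\<in>words_below N. \<bar>Kcoeff M f w - Kcoeff M g w\<bar>)"
proof -
  define D1 where "D1 x = Kinf M f x - Ktrunc M N f x" for x
  define D2 where "D2 x = Ktrunc M N f x - Ktrunc M N g x" for x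
  define D3 where "D3 x = Kinf M g x - Ktrunc M N g x" for x
  have D1: "D1 \<in> L2 M" "l2norm M D1 \<le> 2 * (1/2) ^ N"
    unfolding D1_def[abs_def] using Kinf_minus_Ktrunc[OF f(1), of N] f(2)
    by (auto intro: order_trans mult_left_mono)
  have D3: "D3 \<in> L2 M" "l2norm M D3 \<le> 2 * (1/2) ^ N"
    unfolding D3_def[abs_def] using Kinf_minus_Ktrunc[OF g(1), of N] g(2)
    by (auto intro: order_trans mult_left_mono)
  have D2: "D2 \<in> L2 M" unfolding D2_def[abs_def] by (intro L2_diff L2_Ktrunc f g)
  have "AE x in M. D2 x = cylinder_step (words_below N) (\<lambda>w. Kcoeff M f w - Kcoeff M g w) x"
    using Ktrunc_AE_eq_cylinder_step[of N f] Ktrunc_AE_eq_cylinder_step[of N g]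
    by eventually_elim (simp add: D2_def cylinder_step_def sum_subtractf left_diff_distrib)
  then have "l2norm M D2 = l2norm M (cylinder_step (words_below N) (\<lambda>w. Kcoeff M f w - Kcoeff M g w))"
    using words_below_subset by (intro l2norm_cong_AE) (auto simp: D2_def[abs_def])
  also have "\<dots> \<le> (\<Sum>w\<in>words_below N. \<bar>Kcoeff M f w - Kcoeff M g w\<bar>)"
    by (rule l2norm_cylinder_step_le[OF finite_words_below words_below_subset])
  finally have D2_le: "l2norm M D2 \<le> (\<Sum>w\<in>words_below N. \<bar>Kcoeff M f w - Kcoeff M g w\<bar>)" .
  have "(\<lambda>x. Kinf M f x - Kinf M g x) = (\<lambda>x. (D1 x + D2 x) - D3 x)"
    by (auto simp: D1_def D2_def D3_def)
  then have "l2norm M (\<lambda>x. Kinf M f x - Kinf M g x) \<le> l2norm M (\<lambda>x. D1 x + D2 x) + l2norm M D3"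
    using l2norm_diff_le[OF L2_add[OF D1(1) D2] D3(1)] by simp
  also have "\<dots> \<le> l2norm M D1 + l2norm M D2 + l2norm M D3"
    using l2norm_add_le[OF D1(1) D2] by simp
  finally show ?thesis using D1(2) D2_le D3(2) by simp
qed

end

lemma bounded_countable_family_convergent_subseq:
  fixes a :: "nat \<Rightarrow> 'i::countable \<Rightarrow> real"
  assumes "\<And>k i. \<bar>a k i\<bar> \<le> B"
  obtains \<phi> where "strict_mono \<phi>" "\<And>i. convergent (\<lambda>m. a (\<phi> m) i)"
proof -
  define P where "P j s = convergent (\<lambda>m. a (s m) (from_nat j :: 'i))" for j and s :: "nat \<Rightarrow> nat"
  interpret subseqs P
  proof
    fix j and s :: "nat \<Rightarrow> nat"
    have "bounded (range (\<lambda>m. a (s m) (from_nat j)))"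
      using assms by (intro boundedI[where B=B]) auto
    then obtain l r where "strict_mono r" "((\<lambda>m. a (s m) (from_nat j)) \<circ> r) \<longlonglongrightarrow> l"
      using bounded_imp_convergent_subsequence by blast
    then show "\<exists>r'. strict_mono r' \<and> P j (s \<circ> r')"
      unfolding P_def by (intro exI[of _ r]) (auto simp: convergent_def o_def)
  qed
  have "convergent (\<lambda>m. a (diagseq m) i)" for i
  proof -
    have "P (to_nat i) (diagseq \<circ> (+) (Suc (to_nat i)))"
    proof (rule diagseq_holds)
      fix r s n assume "strict_mono (r :: nat \<Rightarrow> nat)" "P n s"
      then show "P n (s \<circ> r)" unfolding P_def convergent_def
        using LIMSEQ_subseq_LIMSEQ[of "\<lambda>m. a (s m) (from_nat n)"] by (auto simp: o_def)
    qed
    then obtain L where "(\<lambda>m. a (diagseq (m + Suc (to_nat i))) i) \<longlonglongrightarrow> L"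
      unfolding P_def convergent_def by (auto simp: o_def add.commute)
    then have "(\<lambda>m. a (diagseq m) i) \<longlonglongrightarrow> L" by (rule LIMSEQ_offset)
    then show ?thesis by (auto simp: convergent_def)
  qed
  with subseq_diagseq show ?thesis by (rule that)
qed

context cantor_measure
begin

lemma Kinf_Cauchy_of_Kcoeff_Cauchy:
  assumes fs: "\<And>m. fs m \<in> L2 M" "\<And>m. l2norm M (fs m) \<le> 1"
    and coeff: "\<And>w. w \<in> words (length w) \<Longrightarrow> Cauchy (\<lambda>m. Kcoeff M (fs m) w)"
    and e: "e > 0"
  shows "\<exists>m1. \<forall>m\<ge>m1. \<forall>n\<ge>m1. l2norm M (\<lambda>x. Kinf M (fs m) x - Kinf M (fs n) x) < e"
proof -
  obtain N where N: "(1/2::real) ^ N < e / 8" using real_arch_pow_inv[of "e/8" "1/2"] e by auto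
  define W where "W = words_below N"
  define d where "d = e / (2 * (real (card W) + 1))"
  have "d > 0" using e by (simp add: d_def add_pos_nonneg)
  have "\<forall>w\<in>W. \<exists>m0. \<forall>m\<ge>m0. \<forall>n\<ge>m0. dist (Kcoeff M (fs m) w) (Kcoeff M (fs n) w) < d"
  proof
    fix w assume "w \<in> W"
    then have "w \<in> words (length w)" by (auto simp: W_def words_below_def words_def)
    then show "\<exists>m0. \<forall>m\<ge>m0. \<forall>n\<ge>m0. dist (Kcoeff M (fs m) w) (Kcoeff M (fs n) w) < d"
      using metric_CauchyD[OF coeff \<open>d > 0\<close>] by blast
  qed
  then obtain m0 where m0: "\<And>w m n. w \<in> W \<Longrightarrow> m \<ge> m0 w \<Longrightarrow> n \<ge> m0 w \<Longrightarrow>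
      \<bar>Kcoeff M (fs m) w - Kcoeff M (fs n) w\<bar> < d"
    by (metis dist_real_def)
  define m1 where "m1 = (\<Sum>w\<in>W. m0 w)"
  show ?thesis
  proof (intro exI[of _ m1] allI impI)
    fix m n assume "m \<ge> m1" "n \<ge> m1"
    have "(\<Sum>w\<in>W. \<bar>Kcoeff M (fs m) w - Kcoeff M (fs n) w\<bar>) \<le> (\<Sum>w\<in>W. d)"
    proof (rule sum_mono)
      fix w assume w: "w \<in> W"
      then have "m0 w \<le> m1" unfolding m1_def W_def using finite_words_below by (intro member_le_sum) auto
      then show "\<bar>Kcoeff M (fs m) w - Kcoeff M (fs n) w\<bar> \<le> d"
        using m0[OF w, of m n] \<open>m \<ge> m1\<close> \<open>n \<ge> m1\<close> by simp
    qed
    also have "\<dots> = e / 2 * (real (card W) / (real (card W) + 1))"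
      by (simp add: d_def field_simps)
    also have "\<dots> < e / 2"
      using e by (simp add: mult_less_cancel_left1 field_simps)
    finally show "l2norm M (\<lambda>x. Kinf M (fs m) x - Kinf M (fs n) x) < e"
      using l2norm_Kinf_diff_le[OF fs(1,2) fs(1,2), of m n N] N unfolding W_def by linarith
  qed
qed

lemma compact_op_Kinf: "compact_op M (Kinf M)"
  unfolding compact_op_def
proof (intro allI impI)
  fix fs :: "nat \<Rightarrow> real \<Rightarrow> real"
  assume fs: "\<forall>k. fs k \<in> L2 M \<and> l2norm M (fs k) \<le> 1"
  define a where "a k w = (if w \<in> words (length w) then Kcoeff M (fs k) w else 0)" for k w
  have a_bound: "\<bar>a k w\<bar> \<le> 1" for k w unfolding a_def using abs_Kcoeff_le_1 fs by auto
  obtain \<phi> where \<phi>: "strict_mono \<phi>" "\<And>w. convergent (\<lambda>m. a (\<phi> m) w)"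
    using bounded_countable_family_convergent_subseq[of a 1, OF a_bound] by blast
  have "Cauchy (\<lambda>m. Kcoeff M (fs (\<phi> m)) w)" if "w \<in> words (length w)" for w
    using \<phi>(2)[of w] that by (simp add: a_def Cauchy_convergent_iff)
  then have "\<exists>m1. \<forall>m\<ge>m1. \<forall>n\<ge>m1. l2norm M (\<lambda>x. Kinf M (fs (\<phi> m)) x - Kinf M (fs (\<phi> n)) x) < e"
    if "e > 0" for e
    using fs that by (intro Kinf_Cauchy_of_Kcoeff_Cauchy) auto
  with \<phi>(1) show "\<exists>\<phi>::nat \<Rightarrow> nat. strict_mono \<phi> \<and> (\<forall>e>0. \<exists>N. \<forall>m\<ge>N. \<forall>n\<ge>N.
      l2norm M (\<lambda>x. Kinf M (fs (\<phi> m)) x - Kinf M (fs (\<phi> n)) x) < e)"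
    by blast
qed

end

section \<open>Singular values of \<open>K\<^sub>\<infinity>\<close>\<close>

lemma opnorm_le:
  assumes "\<And>f. f \<in> L2 M \<Longrightarrow> l2norm M f \<le> 1 \<Longrightarrow> T f \<in> L2 M \<and> l2norm M (T f) \<le> c"
  shows "opnorm M T \<le> ereal c"
  unfolding opnorm_def using assms by (intro SUP_least) auto

lemma opnorm_ge:
  assumes "f \<in> L2 M" "l2norm M f \<le> 1" "T f \<in> L2 M" "c \<le> l2norm M (T f)"
  shows "ereal c \<le> opnorm M T"
  unfolding opnorm_def using assms by (intro SUP_upper2[of f]) auto

lemma sing_val_le_opnorm: "rank_le M k F \<Longrightarrow> sing_val M T k \<le> opnorm M (\<lambda>f x. T f x - F f x)"
  unfolding sing_val_def by (intro INF_lower) auto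

lemma sing_val_ge:
  "(\<And>F. rank_le M k F \<Longrightarrow> ereal c \<le> opnorm M (\<lambda>f x. T f x - F f x)) \<Longrightarrow> ereal c \<le> sing_val M T k"
  unfolding sing_val_def by (intro INF_greatest) auto

lemma lin_op_linear_AE:
  assumes "lin_op M F" "f \<in> L2 M" "g \<in> L2 M"
  shows "AE x in M. F (\<lambda>y. a * f y + b * g y) x = a * F f x + b * F g x"
  using assms unfolding lin_op_def by blast

lemma lin_op_cmult_AE:
  assumes "lin_op M F" "f \<in> L2 M"
  shows "AE x in M. F (\<lambda>y. a * f y) x = a * F f x"
  using lin_op_linear_AE[OF assms assms(2), of a 0] by simp

lemma lin_op_sum_AE:
  assumes F: "lin_op M F"
  shows "finite I \<Longrightarrow> (\<And>i. i \<in> I \<Longrightarrow> \<phi> i \<in> L2 M) \<Longrightarrow>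
    AE x in M. F (\<lambda>y. \<Sum>i\<in>I. a i * \<phi> i y) x = (\<Sum>i\<in>I. a i * F (\<phi> i) x)"
proof (induction I rule: finite_induct)
  case empty
  then show ?case using lin_op_cmult_AE[OF F L2_zero, of 0] by simp
next
  case (insert j I)
  have "(\<lambda>y. \<Sum>i\<in>I. a i * \<phi> i y) \<in> L2 M" using insert by (intro L2_sum L2_cmult) auto
  then have "AE x in M. F (\<lambda>y. a j * \<phi> j y + 1 * (\<Sum>i\<in>I. a i * \<phi> i y)) x
      = a j * F (\<phi> j) x + 1 * F (\<lambda>y. \<Sum>i\<in>I. a i * \<phi> i y) x"
    using insert.prems by (intro lin_op_linear_AE[OF F]) auto
  moreover have "AE x in M. F (\<lambda>y. \<Sum>i\<in>I. a i * \<phi> i y) x = (\<Sum>i\<in>I. a i * F (\<phi> i) x)"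
    using insert by auto
  ultimately show ?case by eventually_elim (simp add: insert.hyps)
qed

text \<open>One step of Gaussian elimination: the value at \<open>w0\<close> is forced by equation \<open>k\<close>, and the
  reduced equations are the earlier ones minus multiples of equation \<open>k\<close>.\<close>
lemma homogeneous_system_elimination:
  fixes c :: "'a \<Rightarrow> nat \<Rightarrow> real"
  assumes W: "finite W" "w0 \<in> W" "c w0 k \<noteq> 0" and i: "i \<le> k"
    and reduced: "\<And>j. j < k \<Longrightarrow> (\<Sum>w\<in>W - {w0}. l w * (c w j - c w k / c w0 k * c w0 j)) = 0"
  shows "(\<Sum>w\<in>W. (l(w0 := - (\<Sum>v\<in>W - {w0}. l v * c v k) / c w0 k)) w * c w i) = 0"
proof -
  define S where "S j = (\<Sum>w\<in>W - {w0}. l w * c w j)" for j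
  have "(\<Sum>w\<in>W. (l(w0 := - S k / c w0 k)) w * c w i)
      = - S k / c w0 k * c w0 i + (\<Sum>w\<in>W - {w0}. (l(w0 := - S k / c w0 k)) w * c w i)"
    using sum.remove[OF W(1,2), of "\<lambda>w. (l(w0 := - S k / c w0 k)) w * c w i"] by simp
  also have "\<dots> = - S k / c w0 k * c w0 i + S i"
    unfolding S_def by (intro arg_cong2[where f="(+)"] refl sum.cong) auto
  also have "\<dots> = 0"
  proof (cases "i = k")
    case False
    then have "(\<Sum>w\<in>W - {w0}. l w * (c w i - c w k / c w0 k * c w0 i)) = 0"
      using i reduced by simp
    then have "S i - c w0 i / c w0 k * S k = 0"
      unfolding S_def by (simp add: algebra_simps sum_subtractf sum_distrib_left)
    then show ?thesis using W(3) by (simp add: field_simps)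
  qed (use W(3) in simp)
  finally show ?thesis by (simp add: S_def)
qed

lemma homogeneous_system_nontrivial_solution:
  fixes c :: "'a \<Rightarrow> nat \<Rightarrow> real"
  assumes "finite W" "k < card W"
  shows "\<exists>l. (\<exists>w\<in>W. l w \<noteq> 0) \<and> (\<forall>i<k. (\<Sum>w\<in>W. l w * c w i) = 0)"
  using assms
proof (induction k arbitrary: W c)
  case 0
  then obtain w0 where "w0 \<in> W" by fastforce
  then show ?case by (intro exI[of _ "\<lambda>w. if w = w0 then 1 else 0"]) auto
next
  case (Suc k)
  show ?case
  proof (cases "\<forall>w\<in>W. c w k = 0")
    case True
    obtain l where l: "\<exists>w\<in>W. l w \<noteq> 0" "\<forall>i<k. (\<Sum>w\<in>W. l w * c w i) = 0"
      using Suc.IH[of W c] Suc.prems by auto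
    then have "\<forall>i<Suc k. (\<Sum>w\<in>W. l w * c w i) = 0"
      using True by (auto simp: less_Suc_eq)
    then show ?thesis using l by blast
  next
    case False
    then obtain w0 where w0: "w0 \<in> W" "c w0 k \<noteq> 0" by blast
    have "finite (W - {w0})" "k < card (W - {w0})" using Suc.prems w0 by auto
    then obtain l where l: "\<exists>w\<in>W - {w0}. l w \<noteq> 0"
      "\<forall>j<k. (\<Sum>w\<in>W - {w0}. l w * (c w j - c w k / c w0 k * c w0 j)) = 0"
      using Suc.IH[of "W - {w0}" "\<lambda>w j. c w j - c w k / c w0 k * c w0 j"] by blast
    let ?l = "l(w0 := - (\<Sum>v\<in>W - {w0}. l v * c v k) / c w0 k)"
    have "(\<Sum>w\<in>W. ?l w * c w i) = 0" if "i < Suc k" for i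
      using that l(2) Suc.prems(1) w0
      by (intro homogeneous_system_elimination[where c=c and k=k and i=i]) auto
    moreover have "\<exists>w\<in>W. ?l w \<noteq> 0" using l(1) by auto
    ultimately show ?thesis by blast
  qed
qed

context cantor_measure
begin

lemma sing_val_Kinf_le:
  assumes "2 ^ N \<le> k + 1"
  shows "sing_val M (Kinf M) k \<le> ereal (2 * (1/2) ^ N)"
proof -
  have "sing_val M (Kinf M) k \<le> opnorm M (\<lambda>f x. Kinf M f x - Ktrunc M N f x)"
    by (rule sing_val_le_opnorm[OF rank_le_Ktrunc[OF assms]])
  also have "\<dots> \<le> ereal (2 * (1/2) ^ N)"
  proof (rule opnorm_le)
    fix f assume f: "f \<in> L2 M" "l2norm M f \<le> 1"
    have "l2norm M (\<lambda>x. Kinf M f x - Ktrunc M N f x) \<le> 2 * (1/2) ^ N * l2norm M f"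
      by (rule Kinf_minus_Ktrunc(2)[OF f(1)])
    also have "\<dots> \<le> 2 * (1/2) ^ N" using f(2) by (simp add: mult_left_le)
    finally show "(\<lambda>x. Kinf M f x - Ktrunc M N f x) \<in> L2 M
        \<and> l2norm M (\<lambda>x. Kinf M f x - Ktrunc M N f x) \<le> 2 * (1/2) ^ N"
      using Kinf_minus_Ktrunc(1)[OF f(1)] by simp
  qed
  finally show ?thesis .
qed

text \<open>The \<open>2\<^sup>N\<close> indicators of the level-\<open>N\<close> cylinders are mapped into a space of dimension at
  most \<open>k\<close>.\<close>
lemma rank_le_annihilates_cylinder_step:
  assumes "rank_le M k F" "k < 2 ^ N"
  obtains c where "\<exists>w\<in>words N. c w \<noteq> 0" "AE x in M. F (cylinder_step (words N) c) x = 0"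
proof -
  obtain g where F: "lin_op M F"
    and span: "\<forall>f\<in>L2 M. \<exists>c. AE x in M. F f x = (\<Sum>i<k. c i * g i x)"
    using assms(1) unfolding rank_le_def by blast
  have ind: "indicator (Cw w) \<in> L2 M" if "w \<in> words N" for w
    using that Cw_in_sets L2_indicator[OF finite_measure] by blast
  then have "\<forall>w\<in>words N. \<exists>c. AE x in M. F (indicator (Cw w)) x = (\<Sum>i<k. c i * g i x)"
    using span by blast
  then obtain C where C: "\<And>w. w \<in> words N \<Longrightarrow> AE x in M. F (indicator (Cw w)) x = (\<Sum>i<k. C w i * g i x)"
    by metis
  obtain l where l: "\<exists>w\<in>words N. l w \<noteq> 0" "\<forall>i<k. (\<Sum>w\<in>words N. l w * C w i) = 0"
    using homogeneous_system_nontrivial_solution[OF finite_words, of k N C] assms(2)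
    by (auto simp: card_words)
  have "AE x in M. F (cylinder_step (words N) l) x = (\<Sum>w\<in>words N. l w * F (indicator (Cw w)) x)"
    unfolding cylinder_step_def[abs_def] by (rule lin_op_sum_AE[OF F finite_words ind])
  moreover have "AE x in M. \<forall>w\<in>words N. F (indicator (Cw w)) x = (\<Sum>i<k. C w i * g i x)"
    using C by (intro AE_finite_allI[OF finite_words]) auto
  ultimately have "AE x in M. F (cylinder_step (words N) l) x = 0"
  proof eventually_elim
    case (elim x)
    then have "F (cylinder_step (words N) l) x = (\<Sum>w\<in>words N. l w * (\<Sum>i<k. C w i * g i x))"
      by simp
    also have "\<dots> = (\<Sum>i<k. (\<Sum>w\<in>words N. l w * C w i) * g i x)"
      by (simp add: sum_distrib_left sum_distrib_right mult_ac sum.swap[of _ "words N"])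
    also have "\<dots> = 0" using l(2) by simp
    finally show ?case .
  qed
  with l(1) show ?thesis by (rule that)
qed

lemma Kinf_inner_sums:
  assumes u: "u \<in> L2 M"
  shows "(\<lambda>n. (1/2) ^ n * (\<integral>x. (En M n u x)\<^sup>2 \<partial>M)) sums (\<integral>x. Kinf M u x * u x \<partial>M)"
proof -
  define f where "f n x = (1/2) ^ n * En M n u x * u x" for n x
  have fi: "integrable M (f n)" for n
    unfolding f_def using integrable_L2_mult[OF L2_cmult[OF En_L2(1)[OF u]] u] by simp
  have ae: "AE x in M. summable (\<lambda>n. norm (f n x))"
    using Kinf_tail_series(1)[OF u, of 0]
    by eventually_elim (simp add: f_def abs_mult summable_mult2)
  have "(\<integral>x. norm (f n x) \<partial>M) \<le> (1/2) ^ n * (l2norm M u)\<^sup>2" for n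
  proof -
    let ?h = "\<lambda>x. (1/2) ^ n * En M n u x"
    have hL: "?h \<in> L2 M" using u by (intro L2_cmult En_L2)
    have "(\<integral>x. norm (f n x) \<partial>M) = \<bar>\<integral>x. \<bar>?h x\<bar> * \<bar>u x\<bar> \<partial>M\<bar>"
      by (simp add: f_def abs_mult)
    also have "\<dots> \<le> l2norm M ?h * l2norm M u"
      using L2_Cauchy_Schwarz[OF L2_abs[OF hL] L2_abs[OF u]] by (simp add: l2norm_abs)
    also have "\<dots> \<le> (1/2) ^ n * l2norm M u * l2norm M u"
      using En_L2(2)[OF u, of n] l2norm_nonneg[of M u]
      by (simp add: l2norm_cmult mult_left_mono mult_right_mono)
    finally show ?thesis by (simp add: power2_eq_square mult.assoc)
  qed
  then have sn: "summable (\<lambda>n. (\<integral>x. norm (f n x) \<partial>M))"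
    by (intro summable_comparison_test[OF _ summable_mult2[OF summable_geometric[of "1/2::real"]]]) auto
  have "AE x in M. Kinf M u x * u x = (\<Sum>n. f n x)"
    using Kinf_summable_AE[OF u] by eventually_elim (simp add: Kinf_def f_def suminf_mult2)
  moreover have "(\<lambda>x. \<Sum>n. f n x) \<in> borel_measurable M" "(\<lambda>x. Kinf M u x * u x) \<in> borel_measurable M"
    using u unfolding f_def by measurable
  ultimately have "(\<integral>x. Kinf M u x * u x \<partial>M) = (\<integral>x. (\<Sum>n. f n x) \<partial>M)"
    by (intro integral_cong_AE)
  also have "\<dots> = (\<Sum>n. (\<integral>x. f n x \<partial>M))"
    by (rule integral_suminf[OF fi ae sn])
  finally have "(\<lambda>n. \<integral>x. f n x \<partial>M) sums (\<integral>x. Kinf M u x * u x \<partial>M)"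
    using summable_sums[OF summable_integral[OF fi ae sn]] by simp
  moreover have "(\<integral>x. f n x \<partial>M) = (1/2) ^ n * (\<integral>x. (En M n u x)\<^sup>2 \<partial>M)" for n
    unfolding f_def by (simp add: mult.assoc integral_En_mult_self[OF u])
  ultimately show ?thesis by simp
qed

lemma integral_Kinf_mult_self_ge:
  assumes u: "u \<in> L2 M" "l2norm M u = 1" and fixed: "AE x in M. En M N u x = u x"
  shows "(1/2) ^ N \<le> (\<integral>x. Kinf M u x * u x \<partial>M)"
proof -
  have "(\<integral>x. (En M N u x)\<^sup>2 \<partial>M) = (\<integral>x. (u x)\<^sup>2 \<partial>M)"
    using fixed u(1) by (intro integral_cong_AE) auto
  also have "\<dots> = 1" using l2norm_power2[of M u] u(2) by simp
  finally have "(1/2) ^ N = (\<Sum>n\<in>{N}. (1/2) ^ n * (\<integral>x. (En M n u x)\<^sup>2 \<partial>M))" by simp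
  also have "\<dots> \<le> (\<Sum>n. (1/2) ^ n * (\<integral>x. (En M n u x)\<^sup>2 \<partial>M))"
    using sums_summable[OF Kinf_inner_sums[OF u(1)]] by (intro sum_le_suminf) auto
  also have "\<dots> = (\<integral>x. Kinf M u x * u x \<partial>M)"
    using sums_unique[OF Kinf_inner_sums[OF u(1)]] by simp
  finally show ?thesis .
qed

lemma sing_val_Kinf_ge:
  assumes "k < 2 ^ N"
  shows "ereal ((1/2) ^ N) \<le> sing_val M (Kinf M) k"
proof (rule sing_val_ge)
  fix F assume F: "rank_le M k F"
  then have lin: "lin_op M F" by (simp add: rank_le_def)
  obtain c where c: "\<exists>w\<in>words N. c w \<noteq> 0" "AE x in M. F (cylinder_step (words N) c) x = 0"
    using rank_le_annihilates_cylinder_step[OF F assms] by blast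
  let ?v = "cylinder_step (words N) c"
  have vL2: "?v \<in> L2 M" using finite_words by (intro L2_cylinder_step) auto
  have "(l2norm M ?v)\<^sup>2 = (\<Sum>w\<in>words N. (c w)\<^sup>2) * (1/2) ^ N"
    unfolding l2norm_power2 by (rule integral_power2_cylinder_step)
  moreover have "(\<Sum>w\<in>words N. (c w)\<^sup>2) > 0"
    using c(1) finite_words by (auto intro: sum_pos2)
  ultimately have nv: "l2norm M ?v > 0"
    using l2norm_nonneg[of M ?v] by (cases "l2norm M ?v = 0") auto
  define u where "u x = inverse (l2norm M ?v) * ?v x" for x
  have uL2: "u \<in> L2 M" unfolding u_def[abs_def] by (rule L2_cmult[OF vL2])
  have nu: "l2norm M u = 1" unfolding u_def[abs_def] using nv by (simp add: l2norm_cmult)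
  have "u \<in> borel_measurable (Fn M N)"
    unfolding u_def[abs_def] using cylinder_step_measurable_Fn by measurable
  then have inner: "(1/2) ^ N \<le> (\<integral>x. Kinf M u x * u x \<partial>M)"
    by (intro integral_Kinf_mult_self_ge[OF uL2 nu] En_eq_self_AE[OF uL2])
  have Fu: "AE x in M. F u x = 0"
    using lin_op_cmult_AE[OF lin vL2, of "inverse (l2norm M ?v)"] c(2)
    unfolding u_def[abs_def] by eventually_elim simp
  define r where "r x = Kinf M u x - F u x" for x
  have FuL2: "F u \<in> L2 M" using lin uL2 unfolding lin_op_def by blast
  have rL2: "r \<in> L2 M" unfolding r_def[abs_def] by (rule L2_diff[OF L2_Kinf[OF uL2] FuL2])
  have "(\<integral>x. r x * u x \<partial>M) = (\<integral>x. Kinf M u x * u x \<partial>M)"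
    using Fu FuL2 uL2 by (intro integral_cong_AE) (auto simp: r_def)
  then have "(1/2) ^ N \<le> \<bar>\<integral>x. r x * u x \<partial>M\<bar>"
    using inner by linarith
  also have "\<dots> \<le> l2norm M r" using L2_Cauchy_Schwarz[OF rL2 uL2] nu by simp
  finally show "ereal ((1/2) ^ N) \<le> opnorm M (\<lambda>f x. Kinf M f x - F f x)"
    using rL2 uL2 nu unfolding r_def[abs_def] by (intro opnorm_ge[of u]) auto
qed

lemma sing_val_Kinf_bounds:
  "1 / (2 * real (Suc k)) \<le> real_of_ereal (sing_val M (Kinf M) k)"
  "real_of_ereal (sing_val M (Kinf M) k) \<le> 4 / real (Suc k)"
proof -
  obtain N where N: "2 ^ N \<le> k + 1" "k + 1 < 2 ^ (N + 1)"
    using ex_power_ivl1[of 2 "k + 1"] by auto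
  have upper: "sing_val M (Kinf M) k \<le> ereal (2 * (1/2) ^ N)"
    by (rule sing_val_Kinf_le[OF N(1)])
  have lower: "ereal ((1/2) ^ (N + 1)) \<le> sing_val M (Kinf M) k"
    by (rule sing_val_Kinf_ge) (use N(2) in simp)
  have "real (k + 1) < 2 ^ (N + 1)"
    using N(2) by (metis of_nat_less_iff of_nat_numeral of_nat_power)
  moreover have "real (2 ^ N) \<le> real (k + 1)"
    using N(1) by (simp only: of_nat_le_iff)
  ultimately have "real (Suc k) \<le> 2 * 2 ^ N" "2 ^ N \<le> real (Suc k)"
    by simp_all
  then have "1 / (2 * real (Suc k)) \<le> (1/2) ^ (N + 1)" "2 * (1/2) ^ N \<le> 4 / real (Suc k)"
    by (simp_all add: field_simps power_divide)
  with upper lower show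
    "1 / (2 * real (Suc k)) \<le> real_of_ereal (sing_val M (Kinf M) k)"
    "real_of_ereal (sing_val M (Kinf M) k) \<le> 4 / real (Suc k)"
    by (cases "sing_val M (Kinf M) k"; simp)+
qed

end

lemma summable_powr_iff_of_harmonic_bounds:
  fixes s :: "nat \<Rightarrow> real"
  assumes a: "0 < a" and bounds: "\<And>k. a / real (Suc k) \<le> s k" "\<And>k. s k \<le> b / real (Suc k)"
    and r: "0 \<le> r"
  shows "summable (\<lambda>k. s k powr r) \<longleftrightarrow> r > 1"
proof -
  have harmonic: "summable (\<lambda>k. (c / real (Suc k)) powr r) \<longleftrightarrow> r > 1" if "c > 0" for c
  proof -
    have "(\<lambda>k. (c / real (Suc k)) powr r) = (\<lambda>k. c powr r * real (Suc k) powr (-r))"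
      using that by (simp add: powr_divide powr_minus_divide del: of_nat_Suc)
    then have "summable (\<lambda>k. (c / real (Suc k)) powr r) \<longleftrightarrow> summable (\<lambda>k. real (Suc k) powr (-r))"
      using that by (simp add: summable_cmult_iff del: of_nat_Suc)
    also have "\<dots> \<longleftrightarrow> summable (\<lambda>n. real n powr (-r))"
      by (rule summable_Suc_iff)
    finally show ?thesis by (simp add: summable_real_powr_iff)
  qed
  have s_pos: "0 < s k" for k
  proof -
    have "0 < a / real (Suc k)" using a by simp
    then show ?thesis using bounds(1)[of k] by linarith
  qed
  have "s 0 \<le> b" using bounds(2)[of 0] by simp
  with s_pos[of 0] have "0 < b" by linarith
  show ?thesis
  proof
    assume "summable (\<lambda>k. s k powr r)"
    moreover have "norm ((a / real (Suc k)) powr r) \<le> s k powr r" for k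
      using powr_mono2[OF r _ bounds(1)[of k]] a by simp
    ultimately have "summable (\<lambda>k. (a / real (Suc k)) powr r)"
      by (rule summable_comparison_test'[of _ 0])
    then show "r > 1" using harmonic[OF a] by simp
  next
    assume "r > 1"
    then have "summable (\<lambda>k. (b / real (Suc k)) powr r)" using harmonic[OF \<open>0 < b\<close>] by simp
    moreover have "norm (s k powr r) \<le> (b / real (Suc k)) powr r" for k
      using powr_mono2[OF r _ bounds(2)[of k]] s_pos[of k] by simp
    ultimately show "summable (\<lambda>k. s k powr r)"
      by (rule summable_comparison_test'[of _ 0])
  qed
qed

theorem corollary3p7:
  fixes M :: "real measure" and r :: real
  assumes "is_cantor_measure M" and "1 \<le> r"
  shows "schatten M r (Kinf M) \<longleftrightarrow> r > 1"
proof -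
  interpret cantor_measure M by (rule cantor_measure.intro) (rule assms(1))
  have "summable (\<lambda>k. real_of_ereal (sing_val M (Kinf M) k) powr r) \<longleftrightarrow> r > 1"
    using sing_val_Kinf_bounds assms(2)
    by (intro summable_powr_iff_of_harmonic_bounds[where a="1/2" and b=4]) auto
  then show ?thesis
    unfolding schatten_def using lin_op_Kinf compact_op_Kinf by simp
qed

end
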